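(* Let $\mathcal{E}^1,\dots,\mathcal{E}^L$ be $m$-party quantum state ensembles, $\mathcal{E}^l=\{\eta^l_i,\rho^l_i\}_{i=1}^{n_l}$, and let $\vec{x}\in\mathbb{N}_{\vec n}$. Then $p_{\sf L}\big(\bigotimes_{l=1}^L\mathcal{E}^l\big)=\eta_{\vec x}$ if and only if $\eta_{\vec x}\rho_{\vec x}-\eta_{\vec c}\rho_{\vec c}\in\mathbb{SEP}^*$ for all $\vec c\in\mathbb{N}_{\vec n}$. Moreover, in this case $p_{\sf L}\big(\bigotimes_{l=1}^L\mathcal{E}^l\big)=p_{\sf SEP}\big(\bigotimes_{l=1}^L\mathcal{E}^l\big)$ and $p_{\sf L}\big(\bigotimes_{l=1}^L\mathcal{E}^l\big)=\prod_{l=1}^Lp_{\sf L}(\mathcal{E}^l)$.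
   Context: Each ensemble $\mathcal{E}^l$ consists of $m$-party states $\rho^l_i$ on $\mathcal{H}=\bigotimes_{k=1}^m\mathbb{C}^{d_k}$ ($m,d_k\ge2$) with nonzero probabilities $\eta^l_i$ summing to $1$. Let $\mathbb{N}_{n_l}=\{1,\dots,n_l\}$, $\vec n=(n_1,\dots,n_L)$, $\mathbb{N}_{\vec n}=\mathbb{N}_{n_1}\times\cdots\times\mathbb{N}_{n_L}$. For $\vec c=(c_1,\dots,c_L)\in\mathbb{N}_{\vec n}$ set $\eta_{\vec c}=\prod_l\eta^l_{c_l}$ and $\rho_{\vec c}=\bigotimes_l\rho^l_{c_l}$; the sequence ensemble is $\bigotimes_l\mathcal{E}^l=\{\eta_{\vec c},\rho_{\vec c}\}_{\vec c\in\mathbb{N}_{\vec n}}$, viewed as an $m$-party ensemble on $\mathcal{H}^{\otimes L}$ in which party $\mathsf{A}_k$ holds the $k$-th factor $\mathbb{C}^{d_k}$ of every copy (so it is again an $m$-party system with local dimensions $d_k^L$). Separability: an operator is separable if it is a sum of tensor products, over the parties $\mathsf{A}_1,\dots,\mathsf{A}_m$, of positive semidefinite local operators; $\mathbb{SEP}$ denotes these. $\mathbb{SEP}^*$ is the set of Hermitian $E$ with $\operatorname{Tr}(E\sigma)\ge0$ for every separable state $\sigma$ (block-positive operators), with respect to $\mathsf{A}_1,\dots,\mathsf{A}_m$. A measurement is separable if all its elements are separable, LOCC if realizable by local operations and classical communication among $\mathsf{A}_1,\dots,\mathsf{A}_m$. For an ensemble $\{\eta_j,\rho_j\}_j$, $p_{\sf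 G}$, $p_{\sf SEP}$, $p_{\sf L}$ denote the maximum of $\sum_j\eta_j\operatorname{Tr}(\rho_jM_j)$ over all measurements, separable measurements, and LOCC measurements $\{M_j\}_j$ respectively. *)

theory Defs
  imports "HOL-Analysis.Analysis"
begin

text \<open>Operators on a finite-dimensional space with orthonormal basis indexed by a
finite set I are represented as kernels I x I -> complex (values outside I are
irrelevant).  An m-party system with local basis index sets S k (k < m) has
global basis index set PiE {..<m} S, i.e. the tensor product of the local spaces.\<close>

type_synonym 'i op = "'i \<Rightarrow> 'i \<Rightarrow> complex"

definition gidx :: "nat \<Rightarrow> (nat \<Rightarrow> 'a set) \<Rightarrow> (nat \<Rightarrow> 'a) set" where
  "gidx m S = PiE {..<m} S"

definition idop :: "'i op" where
  "idop i j = (if i = j then 1 else 0)"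

definition mmult :: "'i set \<Rightarrow> 'i op \<Rightarrow> 'i op \<Rightarrow> 'i op" where
  "mmult I A B = (\<lambda>i j. \<Sum>k\<in>I. A i k * B k j)"

definition trace_on :: "'i set \<Rightarrow> 'i op \<Rightarrow> complex" where
  "trace_on I A = (\<Sum>i\<in>I. A i i)"

definition hermitian_on :: "'i set \<Rightarrow> 'i op \<Rightarrow> bool" where
  "hermitian_on I A \<longleftrightarrow> (\<forall>i\<in>I. \<forall>j\<in>I. A i j = cnj (A j i))"

definition psd_on :: "'i set \<Rightarrow> 'i op \<Rightarrow> bool" where
  "psd_on I A \<longleftrightarrow> (\<forall>v :: 'i \<Rightarrow> complex.
      Im (\<Sum>i\<in>I. \<Sum>j\<in>I. cnj (v i) * A i j * v j) = 0 \<and>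
      0 \<le> Re (\<Sum>i\<in>I. \<Sum>j\<in>I. cnj (v i) * A i j * v j))"

definition density_on :: "'i set \<Rightarrow> 'i op \<Rightarrow> bool" where
  "density_on I \<rho> \<longleftrightarrow> psd_on I \<rho> \<and> trace_on I \<rho> = 1"

definition ptensor :: "nat \<Rightarrow> (nat \<Rightarrow> 'a op) \<Rightarrow> (nat \<Rightarrow> 'a) op" where
  "ptensor m A = (\<lambda>f g. \<Prod>k<m. A k (f k) (g k))"

definition sep_op :: "nat \<Rightarrow> (nat \<Rightarrow> 'a set) \<Rightarrow> (nat \<Rightarrow> 'a) op \<Rightarrow> bool" where
  "sep_op m S E \<longleftrightarrow> (\<exists>(N::nat) (A :: nat \<Rightarrow> nat \<Rightarrow> 'a op).
      (\<forall>t<N. \<forall>k<m. psd_on (S k) (A t k)) \<and>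
      (\<forall>f\<in>gidx m S. \<forall>g\<in>gidx m S. E f g = (\<Sum>t<N. ptensor m (A t) f g)))"

definition sep_state :: "nat \<Rightarrow> (nat \<Rightarrow> 'a set) \<Rightarrow> (nat \<Rightarrow> 'a) op \<Rightarrow> bool" where
  "sep_state m S \<sigma> \<longleftrightarrow> sep_op m S \<sigma> \<and> trace_on (gidx m S) \<sigma> = 1"

definition sep_dual :: "nat \<Rightarrow> (nat \<Rightarrow> 'a set) \<Rightarrow> (nat \<Rightarrow> 'a) op \<Rightarrow> bool" where
  "sep_dual m S E \<longleftrightarrow> hermitian_on (gidx m S) E \<and>
     (\<forall>\<sigma>. sep_state m S \<sigma> \<longrightarrow> 0 \<le> Re (trace_on (gidx m S) (mmult (gidx m S) E \<sigma>)))"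

definition povm_on :: "'i set \<Rightarrow> 'c set \<Rightarrow> ('c \<Rightarrow> 'i op) \<Rightarrow> bool" where
  "povm_on I C M \<longleftrightarrow> finite C \<and> (\<forall>c\<in>C. psd_on I (M c)) \<and>
     (\<forall>i\<in>I. \<forall>j\<in>I. (\<Sum>c\<in>C. M c i j) = idop i j)"

definition psucc :: "'i set \<Rightarrow> 'c set \<Rightarrow> ('c \<Rightarrow> real) \<Rightarrow> ('c \<Rightarrow> 'i op) \<Rightarrow> ('c \<Rightarrow> 'i op) \<Rightarrow> real" where
  "psucc I C \<eta> \<rho> M = (\<Sum>c\<in>C. \<eta> c * Re (trace_on I (mmult I (\<rho> c) (M c))))"

definition loc_lift :: "nat \<Rightarrow> nat \<Rightarrow> 'a op \<Rightarrow> (nat \<Rightarrow> 'a) op" where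
  "loc_lift m k K = (\<lambda>f' f. K (f' k) (f k) * (\<Prod>k'\<in>{..<m} - {k}. idop (f' k') (f k')))"

definition sandwich :: "'i set \<Rightarrow> 'i op \<Rightarrow> 'i op \<Rightarrow> 'i op" where
  "sandwich I' K P = (\<lambda>f g. \<Sum>f'\<in>I'. \<Sum>g'\<in>I'. cnj (K f' f) * P f' g' * K g' g)"

definition kraus_complete :: "'a set \<Rightarrow> 'a set \<Rightarrow> nat set \<Rightarrow> (nat \<Rightarrow> 'a op) \<Rightarrow> bool" where
  "kraus_complete S S' A K \<longleftrightarrow> (\<forall>j\<in>S. \<forall>j'\<in>S.
      (\<Sum>a\<in>A. \<Sum>i\<in>S'. cnj (K a i j) * K a i j') = idop j j')"

text \<open>loccp m S O P: P w (w in O) are the POVM elements, indexed by the transcripts w,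
of a finite-round LOCC protocol on the m-party system with local index sets S.
In each round some party k applies a local instrument (output space may change),
broadcasts the outcome a, and the protocol continues depending on a.\<close>
inductive loccp :: "nat \<Rightarrow> (nat \<Rightarrow> 'a set) \<Rightarrow> nat list set \<Rightarrow> (nat list \<Rightarrow> (nat \<Rightarrow> 'a) op) \<Rightarrow> bool"
  for m :: nat where
  triv: "loccp m S {[]} (\<lambda>_. idop)"
| step: "\<lbrakk> k < m; finite A; finite S'; kraus_complete (S k) S' A K;
          \<forall>a\<in>A. loccp m (S(k := S')) (Os a) (Ps a) \<rbrakk> \<Longrightarrow>
         loccp m S (\<Union>a\<in>A. (Cons a) ` Os a)
           (\<lambda>w. sandwich (gidx m (S(k := S'))) (loc_lift m k (K (hd w))) (Ps (hd w) (tl w)))"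

text \<open>LOCC measurement: coarse-graining of the outcomes of a finite-round LOCC protocol.\<close>
definition locc_povm :: "nat \<Rightarrow> (nat \<Rightarrow> 'a set) \<Rightarrow> 'c set \<Rightarrow> ('c \<Rightarrow> (nat \<Rightarrow> 'a) op) \<Rightarrow> bool" where
  "locc_povm m S C M \<longleftrightarrow> (\<exists>Ws P (g :: nat list \<Rightarrow> 'c). loccp m S Ws P \<and> g ` Ws \<subseteq> C \<and>
      (\<forall>c\<in>C. \<forall>f\<in>gidx m S. \<forall>h\<in>gidx m S. M c f h = (\<Sum>w\<in>{w\<in>Ws. g w = c}. P w f h)))"

definition sep_povm :: "nat \<Rightarrow> (nat \<Rightarrow> 'a set) \<Rightarrow> 'c set \<Rightarrow> ('c \<Rightarrow> (nat \<Rightarrow> 'a) op) \<Rightarrow> bool" where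
  "sep_povm m S C M \<longleftrightarrow> (\<forall>c\<in>C. sep_op m S (M c))"

definition p_G :: "nat \<Rightarrow> (nat \<Rightarrow> 'a set) \<Rightarrow> 'c set \<Rightarrow> ('c \<Rightarrow> real) \<Rightarrow> ('c \<Rightarrow> (nat \<Rightarrow> 'a) op) \<Rightarrow> real" where
  "p_G m S C \<eta> \<rho> = Sup {psucc (gidx m S) C \<eta> \<rho> M | M. povm_on (gidx m S) C M}"

definition p_SEP :: "nat \<Rightarrow> (nat \<Rightarrow> 'a set) \<Rightarrow> 'c set \<Rightarrow> ('c \<Rightarrow> real) \<Rightarrow> ('c \<Rightarrow> (nat \<Rightarrow> 'a) op) \<Rightarrow> real" where
  "p_SEP m S C \<eta> \<rho> = Sup {psucc (gidx m S) C \<eta> \<rho> M | M. povm_on (gidx m S) C M \<and> sep_povm m S C M}"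

definition p_L :: "nat \<Rightarrow> (nat \<Rightarrow> 'a set) \<Rightarrow> 'c set \<Rightarrow> ('c \<Rightarrow> real) \<Rightarrow> ('c \<Rightarrow> (nat \<Rightarrow> 'a) op) \<Rightarrow> real" where
  "p_L m S C \<eta> \<rho> = Sup {psucc (gidx m S) C \<eta> \<rho> M | M. povm_on (gidx m S) C M \<and> locc_povm m S C M}"

definition ensemble :: "nat \<Rightarrow> (nat \<Rightarrow> nat) \<Rightarrow> nat \<Rightarrow> (nat \<Rightarrow> real) \<Rightarrow> (nat \<Rightarrow> (nat \<Rightarrow> nat) op) \<Rightarrow> bool" where
  "ensemble m d n \<eta> \<rho> \<longleftrightarrow> n \<ge> 1 \<and> (\<forall>i\<in>{1..n}. \<eta> i > 0) \<and> (\<Sum>i\<in>{1..n}. \<eta> i) = 1 \<and>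
     (\<forall>i\<in>{1..n}. density_on (gidx m (\<lambda>k. {..<d k})) (\<rho> i))"

text \<open>L-copy system: party k holds the k-th factor of every copy l in {1..L};
its local basis index is a function l \<mapsto> i_l.\<close>
definition seqS :: "nat \<Rightarrow> (nat \<Rightarrow> nat) \<Rightarrow> nat \<Rightarrow> (nat \<Rightarrow> nat) set" where
  "seqS L d = (\<lambda>k. PiE {1..L} (\<lambda>l. {..<d k}))"

definition seq_idx :: "nat \<Rightarrow> (nat \<Rightarrow> nat) \<Rightarrow> (nat \<Rightarrow> nat) set" where
  "seq_idx L n = PiE {1..L} (\<lambda>l. {1..n l})"

definition seq_prob :: "nat \<Rightarrow> (nat \<Rightarrow> nat \<Rightarrow> real) \<Rightarrow> (nat \<Rightarrow> nat) \<Rightarrow> real" where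
  "seq_prob L \<eta> c = (\<Prod>l\<in>{1..L}. \<eta> l (c l))"

definition seq_state :: "nat \<Rightarrow> nat \<Rightarrow> (nat \<Rightarrow> nat \<Rightarrow> (nat \<Rightarrow> nat) op) \<Rightarrow> (nat \<Rightarrow> nat)
    \<Rightarrow> (nat \<Rightarrow> (nat \<Rightarrow> nat)) op" where
  "seq_state m L \<rho> c = (\<lambda>F G. \<Prod>l\<in>{1..L}.
      \<rho> l (c l) (restrict (\<lambda>k. F k l) {..<m}) (restrict (\<lambda>k. G k l) {..<m}))"

end

theory Submission
  imports Defs
begin

text \<open>If every \<open>\<eta>\<^sub>x \<rho>\<^sub>x - \<eta>\<^sub>c \<rho>\<^sub>c\<close> is block positive, then for any separable POVM
  \<open>{M\<^sub>c}\<close> one has \<open>\<eta>\<^sub>c tr(\<rho>\<^sub>c M\<^sub>c) \<le> \<eta>\<^sub>x tr(\<rho>\<^sub>x M\<^sub>c)\<close>; summing over \<open>c\<close> bounds the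
  success probability by \<open>\<eta>\<^sub>x\<close>, which the LOCC measurement "always answer \<open>x\<close>" attains.
  Conversely, if some \<open>\<eta>\<^sub>x \<rho>\<^sub>x - \<eta>\<^sub>c \<rho>\<^sub>c\<close> is not block positive, its expectation on some
  unit product vector \<open>\<Phi> = \<phi>\<^sub>1 \<otimes> \<dots> \<otimes> \<phi>\<^sub>m\<close> is negative. Letting each party in turn
  project onto its \<open>\<phi>\<^sub>k\<close> and answering \<open>c\<close> iff all projections succeed (\<open>x\<close> otherwise) is an
  LOCC measurement with success probability \<open>\<eta>\<^sub>x - \<langle>\<Phi>| \<eta>\<^sub>x \<rho>\<^sub>x - \<eta>\<^sub>c \<rho>\<^sub>c |\<Phi>\<rangle> > \<eta>\<^sub>x\<close>.

  For a sequence ensemble, block positivity of all the sequence operators implies that of every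
  single-copy operator, since testing with vectors that are product across the copies isolates
  one copy. Hence \<open>p\<^sub>L(\<E>\<^sup>l) = \<eta>\<^sup>l(x\<^sub>l)\<close> for every \<open>l\<close>, and the product of these is \<open>\<eta>\<^sub>x\<close>.\<close>

section \<open>Positive semidefinite kernels\<close>

definition qform :: "'i set \<Rightarrow> 'i op \<Rightarrow> ('i \<Rightarrow> complex) \<Rightarrow> complex" where
  "qform I A v = (\<Sum>i\<in>I. \<Sum>j\<in>I. cnj (v i) * A i j * v j)"

lemma psd_on_iff_qform: "psd_on I A \<longleftrightarrow> (\<forall>v. Im (qform I A v) = 0 \<and> 0 \<le> Re (qform I A v))"
  unfolding psd_on_def qform_def by simp

lemma qform_cong:
  "(\<And>i j. i \<in> I \<Longrightarrow> j \<in> I \<Longrightarrow> A i j = B i j) \<Longrightarrow> (\<And>i. i \<in> I \<Longrightarrow> v i = w i)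
   \<Longrightarrow> qform I A v = qform I B w"
  unfolding qform_def by (intro sum.cong refl) auto

lemma psd_on_cong: "(\<And>i j. i \<in> I \<Longrightarrow> j \<in> I \<Longrightarrow> A i j = B i j) \<Longrightarrow> psd_on I A \<longleftrightarrow> psd_on I B"
  unfolding psd_on_iff_qform using qform_cong[of I A B] by metis

lemma qform_mono_neutral:
  assumes "finite I" "J \<subseteq> I" "\<And>i. i \<in> I - J \<Longrightarrow> v i = 0"
  shows "qform I A v = qform J A v"
proof -
  have "qform I A v = (\<Sum>i\<in>I. \<Sum>j\<in>J. cnj (v i) * A i j * v j)"
    unfolding qform_def
    by (intro sum.cong refl sum.mono_neutral_right) (use assms in auto)
  also have "\<dots> = qform J A v"
    unfolding qform_def by (intro sum.mono_neutral_right) (use assms in auto)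
  finally show ?thesis .
qed

lemma qform_singleton:
  assumes "finite I" "a \<in> I" "\<And>i. i \<in> I \<Longrightarrow> i \<noteq> a \<Longrightarrow> v i = 0"
  shows "qform I A v = cnj (v a) * A a a * v a"
  using qform_mono_neutral[of I "{a}" v A] assms by (simp add: qform_def)

lemma qform_doubleton:
  assumes "finite I" "a \<in> I" "b \<in> I" "a \<noteq> b" "\<And>i. i \<in> I \<Longrightarrow> i \<noteq> a \<Longrightarrow> i \<noteq> b \<Longrightarrow> v i = 0"
  shows "qform I A v = cnj (v a) * A a a * v a + cnj (v a) * A a b * v b + cnj (v b) * A b a * v a
     + cnj (v b) * A b b * v b"
  using qform_mono_neutral[of I "{a, b}" v A] assms by (simp add: qform_def)

lemma qform_sum: "qform I (\<lambda>i j. \<Sum>t\<in>T. B t i j) w = (\<Sum>t\<in>T. qform I (B t) w)"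
  unfolding qform_def by (simp add: sum_distrib_left sum_distrib_right sum.swap[of _ T])

lemma qform_diff: "qform I (\<lambda>i j. A i j - B i j) w = qform I A w - qform I B w"
  unfolding qform_def by (simp add: algebra_simps sum_subtractf)

lemma qform_scale: "qform I (\<lambda>i j. c * A i j) w = c * qform I A w"
  unfolding qform_def by (simp add: algebra_simps sum_distrib_left)

lemma qform_scale_vector: "qform I A (\<lambda>i. complex_of_real r * v i) = complex_of_real (r * r) * qform I A v"
  unfolding qform_def by (simp add: sum_distrib_left mult_ac)

lemma qform_outer:
  "qform I (\<lambda>i j. u i * cnj (u j)) w = cnj (\<Sum>j\<in>I. cnj (u j) * w j) * (\<Sum>j\<in>I. cnj (u j) * w j)"
  unfolding qform_def by (simp add: cnj_sum sum_product mult_ac)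

lemma qform_eq_if_zero_row:
  assumes "a \<in> I" "\<forall>j\<in>I. B a j = 0 \<and> B j a = 0" "\<And>i. i \<in> I \<Longrightarrow> i \<noteq> a \<Longrightarrow> w i = w' i"
  shows "qform I B w = qform I B w'"
  unfolding qform_def
  by (intro sum.cong refl) (use assms in \<open>metis mult_zero_left mult_zero_right\<close>)

lemma psd_on_qform_real: "psd_on I A \<Longrightarrow> qform I A v = complex_of_real (Re (qform I A v))"
  unfolding psd_on_iff_qform by (simp add: complex_eq_iff)

lemma psd_on_diag:
  assumes "finite I" "psd_on I A" "a \<in> I"
  shows "Im (A a a) = 0" "0 \<le> Re (A a a)"
proof -
  have "qform I A (\<lambda>i. if i = a then 1 else 0) = A a a"
    using qform_singleton[OF assms(1,3)] by simp
  then show "Im (A a a) = 0" "0 \<le> Re (A a a)" using assms(2) unfolding psd_on_iff_qform by metis+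
qed

lemma psd_on_diag_real:
  assumes "finite I" "psd_on I A" "a \<in> I"
  shows "A a a = complex_of_real (Re (A a a))"
  using psd_on_diag(1)[OF assms] by (simp add: complex_eq_iff)

text \<open>Testing the form on \<open>e\<^sub>a + e\<^sub>b\<close> and \<open>e\<^sub>a + \<i> e\<^sub>b\<close> recovers both parts of \<open>A a b\<close>.\<close>
lemma psd_on_hermitian:
  assumes "finite I" "psd_on I A" "a \<in> I" "b \<in> I"
  shows "A b a = cnj (A a b)"
proof (cases "a = b")
  case True
  then show ?thesis using psd_on_diag[OF assms(1,2,3)] by (simp add: complex_eq_iff)
next
  case False
  have "qform I A (\<lambda>i. if i = a then 1 else if i = b then 1 else 0) = A a a + A a b + A b a + A b b"
    using qform_doubleton[OF assms(1,3,4) False] False by simp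
  moreover have "qform I A (\<lambda>i. if i = a then 1 else if i = b then \<i> else 0)
      = A a a + A a b * \<i> - \<i> * A b a + A b b"
    using qform_doubleton[OF assms(1,3,4) False] False by (simp add: algebra_simps)
  ultimately have "Im (A a a + A a b + A b a + A b b) = 0" "Im (A a a + A a b * \<i> - \<i> * A b a + A b b) = 0"
    using assms(2) unfolding psd_on_iff_qform by metis+
  moreover have "Im (A a a) = 0" "Im (A b b) = 0"
    using psd_on_diag(1)[OF assms(1,2)] assms(3,4) by auto
  ultimately show ?thesis by (simp add: complex_eq_iff)
qed

lemma psd_on_sum_outer:
  assumes "\<forall>i\<in>I. \<forall>j\<in>I. A i j = (\<Sum>t\<in>T. v t i * cnj (v t j))"
  shows "psd_on I A"
  unfolding psd_on_iff_qform
proof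
  fix w
  define z where "z t = (\<Sum>j\<in>I. cnj (v t j) * w j)" for t
  have "qform I A w = qform I (\<lambda>i j. \<Sum>t\<in>T. v t i * cnj (v t j)) w"
    by (rule qform_cong) (use assms in auto)
  also have "\<dots> = (\<Sum>t\<in>T. cnj (z t) * z t)"
    unfolding qform_sum qform_outer z_def ..
  finally have eq: "qform I A w = (\<Sum>t\<in>T. cnj (z t) * z t)" .
  show "Im (qform I A w) = 0 \<and> 0 \<le> Re (qform I A w)"
    unfolding eq Im_sum Re_sum by (auto simp: algebra_simps intro: sum_nonneg)
qed

lemma psd_on_outer: "psd_on I (\<lambda>i j. u i * cnj (u j))"
  by (rule psd_on_sum_outer[where T="{()}" and v="\<lambda>_. u"]) auto

lemma psd_on_sum: "finite T \<Longrightarrow> \<forall>t\<in>T. psd_on I (A t) \<Longrightarrow> psd_on I (\<lambda>i j. \<Sum>t\<in>T. A t i j)"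
  unfolding psd_on_iff_qform qform_sum by (auto simp: Im_sum Re_sum intro: sum_nonneg)

lemma psd_on_subset:
  assumes "finite I" "J \<subseteq> I" "psd_on I A"
  shows "psd_on J A"
  unfolding psd_on_iff_qform
proof
  fix w :: "_ \<Rightarrow> complex"
  let ?w = "\<lambda>i. if i \<in> J then w i else 0"
  have "qform I A ?w = qform J A w"
    using qform_mono_neutral[OF assms(1,2), of ?w A] by (simp add: qform_cong[of J A A ?w w])
  then show "Im (qform J A w) = 0 \<and> 0 \<le> Re (qform J A w)" using assms(3) unfolding psd_on_iff_qform by metis
qed

text \<open>If \<open>A a j = z \<noteq> 0\<close>, the test vector \<open>-r z e\<^sub>a + e\<^sub>j\<close> with \<open>r\<close> large makes the form negative.\<close>
lemma psd_on_zero_diag_row: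
  assumes fin: "finite I" and psd: "psd_on I A" and a: "a \<in> I" and zero: "A a a = 0" and j: "j \<in> I"
  shows "A a j = 0"
proof (rule ccontr)
  assume nz: "A a j \<noteq> 0"
  define z where "z = A a j"
  have ja: "j \<noteq> a" using nz zero by auto
  define n2 where "n2 = (Re z)^2 + (Im z)^2"
  have n2p: "n2 > 0" using nz unfolding n2_def z_def by (simp add: complex_eq_iff sum_power2_gt_zero_iff)
  define r where "r = (\<bar>Re (A j j)\<bar> + 1) / (2 * n2)"
  define s where "s = - complex_of_real r * z"
  have "qform I A (\<lambda>i. if i = a then s else if i = j then 1 else 0)
      = cnj s * A a a * s + cnj s * A a j + A j a * s + A j j"
    using qform_doubleton[OF fin a j ja[symmetric]] ja by auto
  also have "\<dots> = cnj s * z + cnj z * s + A j j"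
    using zero psd_on_hermitian[OF fin psd a j] unfolding z_def by simp
  also have "cnj s * z + cnj z * s = - complex_of_real (2 * r * n2)"
    unfolding s_def n2_def by (simp add: complex_eq_iff power2_eq_square algebra_simps)
  finally have "Re (qform I A (\<lambda>i. if i = a then s else if i = j then 1 else 0)) = Re (A j j) - 2 * r * n2"
    by simp
  also have "2 * r * n2 = \<bar>Re (A j j)\<bar> + 1" unfolding r_def using n2p by simp
  finally have "Re (qform I A (\<lambda>i. if i = a then s else if i = j then 1 else 0)) < 0" by linarith
  then show False using psd unfolding psd_on_iff_qform by (metis not_le)
qed

text \<open>One Cholesky step: on a vector \<open>w\<close> the deflated form equals the old form at \<open>w\<close> with the
  entry \<open>w a\<close> changed so that \<open>u\<^sup>* w = 0\<close>.\<close>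
lemma psd_on_deflate:
  assumes fin: "finite I" and psd: "psd_on I A" and a: "a \<in> I" and pos: "0 < Re (A a a)"
  defines "u \<equiv> \<lambda>i. A i a / complex_of_real (sqrt (Re (A a a)))"
  shows "psd_on I (\<lambda>i j. A i j - u i * cnj (u j))"
    and "\<forall>j\<in>I. A a j - u a * cnj (u j) = 0 \<and> A j a - u j * cnj (u a) = 0"
proof -
  define sa where "sa = sqrt (Re (A a a))"
  have sap: "sa > 0" unfolding sa_def using pos by simp
  have Aaa: "A a a = complex_of_real (sa * sa)"
    unfolding sa_def using psd_on_diag_real[OF fin psd a] pos by simp
  have cu: "cnj (u j) = A a j / complex_of_real sa" if "j \<in> I" for j
    unfolding u_def sa_def using psd_on_hermitian[OF fin psd that a] by simp
  have ua: "u a = complex_of_real sa"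
    unfolding u_def sa_def[symmetric] Aaa using sap by simp
  show row: "\<forall>j\<in>I. A a j - u a * cnj (u j) = 0 \<and> A j a - u j * cnj (u a) = 0"
    using sap by (simp add: cu ua) (simp add: u_def sa_def)
  show "psd_on I (\<lambda>i j. A i j - u i * cnj (u j))"
    unfolding psd_on_iff_qform
  proof
    fix w
    define w' where "w' = w(a := - (\<Sum>j\<in>I - {a}. A a j * w j) / A a a)"
    have "(\<Sum>j\<in>I. cnj (u j) * w' j) = (\<Sum>j\<in>I. A a j * w' j) / complex_of_real sa"
      by (simp add: cu sum_divide_distrib)
    also have "(\<Sum>j\<in>I. A a j * w' j) = A a a * w' a + (\<Sum>j\<in>I - {a}. A a j * w j)"
      by (simp add: sum.remove[OF fin a] w'_def)
    also have "\<dots> = 0" using Aaa sap by (simp add: w'_def)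
    finally have "qform I (\<lambda>i j. u i * cnj (u j)) w' = 0" unfolding qform_outer by simp
    moreover have "qform I (\<lambda>i j. A i j - u i * cnj (u j)) w = qform I (\<lambda>i j. A i j - u i * cnj (u j)) w'"
      by (rule qform_eq_if_zero_row[OF a row]) (simp add: w'_def)
    ultimately have "qform I (\<lambda>i j. A i j - u i * cnj (u j)) w = qform I A w'"
      by (simp add: qform_diff)
    then show "Im (qform I (\<lambda>i j. A i j - u i * cnj (u j)) w) = 0 \<and> 0 \<le> Re (qform I (\<lambda>i j. A i j - u i * cnj (u j)) w)"
      using psd unfolding psd_on_iff_qform by metis
  qed
qed

lemma sum_outer_extend_zero_row:
  assumes "\<forall>j\<in>insert a J. B a j = 0 \<and> B j a = 0" "\<forall>i\<in>J. \<forall>j\<in>J. B i j = (\<Sum>t<N. v t i * cnj (v t j))"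
  shows "\<forall>i\<in>insert a J. \<forall>j\<in>insert a J. B i j = (\<Sum>t<N. ((v t)(a := 0)) i * cnj (((v t)(a := 0)) j))"
proof (intro ballI)
  fix i j assume "i \<in> insert a J" "j \<in> insert a J"
  then show "B i j = (\<Sum>t<N. ((v t)(a := 0)) i * cnj (((v t)(a := 0)) j))"
    by (cases "i = a \<or> j = a") (use assms in auto)
qed

lemma psd_on_gram:
  assumes "finite I" "psd_on I A"
  shows "\<exists>(N::nat) v. \<forall>i\<in>I. \<forall>j\<in>I. A i j = (\<Sum>t<N. v t i * cnj (v t j))"
  using assms
proof (induction I arbitrary: A rule: finite_induct)
  case empty
  then show ?case by auto
next
  case (insert a J)
  let ?I = "insert a J"
  have fin: "finite ?I" using insert by auto
  have extend: "\<exists>(N::nat) v. \<forall>i\<in>?I. \<forall>j\<in>?I. B i j = (\<Sum>t<N. v t i * cnj (v t j))"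
    if B0: "\<forall>j\<in>?I. B a j = 0 \<and> B j a = 0" and Bpsd: "psd_on ?I B" for B
  proof -
    have "psd_on J B" by (rule psd_on_subset[OF fin _ Bpsd]) auto
    then obtain N :: nat and v where "\<forall>i\<in>J. \<forall>j\<in>J. B i j = (\<Sum>t<N. v t i * cnj (v t j))"
      using insert.IH by blast
    from sum_outer_extend_zero_row[OF B0 this] show ?thesis by (intro exI)
  qed
  show ?case
  proof (cases "Re (A a a) = 0")
    case True
    then have "A a a = 0" using psd_on_diag_real[OF fin insert.prems, of a] by simp
    have "\<forall>j\<in>?I. A a j = 0 \<and> A j a = 0"
    proof
      fix j assume j: "j \<in> ?I"
      have "A a j = 0" by (rule psd_on_zero_diag_row[OF fin insert.prems _ \<open>A a a = 0\<close> j]) simp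
      then show "A a j = 0 \<and> A j a = 0" using psd_on_hermitian[OF fin insert.prems, of a j] j by simp
    qed
    then show ?thesis using extend insert.prems by blast
  next
    case False
    then have pos: "0 < Re (A a a)" using psd_on_diag(2)[OF fin insert.prems, of a] by simp
    define u where "u i = A i a / complex_of_real (sqrt (Re (A a a)))" for i
    obtain N :: nat and v where v: "\<forall>i\<in>?I. \<forall>j\<in>?I. A i j - u i * cnj (u j) = (\<Sum>t<N. v t i * cnj (v t j))"
      using extend[OF psd_on_deflate(2,1)[OF fin insert.prems _ pos]] unfolding u_def by auto
    show ?thesis
    proof (intro exI ballI)
      fix i j assume "i \<in> ?I" "j \<in> ?I"
      then have "A i j - u i * cnj (u j) = (\<Sum>t<N. v t i * cnj (v t j))" using v by blast
      then show "A i j = (\<Sum>t<Suc N. (v(N := u)) t i * cnj ((v(N := u)) t j))"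
        by (simp add: diff_eq_eq)
    qed
  qed
qed

lemma psd_on_gram_family:
  fixes A :: "'p \<Rightarrow> 'i op"
  assumes "\<forall>p\<in>P. finite (I p) \<and> psd_on (I p) (A p)"
  shows "\<exists>(n :: 'p \<Rightarrow> nat) v. \<forall>p\<in>P. \<forall>i\<in>I p. \<forall>j\<in>I p. A p i j = (\<Sum>s<n p. v p s i * cnj (v p s j))"
proof -
  have "\<forall>p\<in>P. \<exists>nv :: nat \<times> (nat \<Rightarrow> 'i \<Rightarrow> complex).
      \<forall>i\<in>I p. \<forall>j\<in>I p. A p i j = (\<Sum>s<fst nv. snd nv s i * cnj (snd nv s j))"
  proof
    fix p assume "p \<in> P"
    then obtain N :: nat and v where "\<forall>i\<in>I p. \<forall>j\<in>I p. A p i j = (\<Sum>s<N. v s i * cnj (v s j))"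
      using psd_on_gram assms by blast
    then show "\<exists>nv :: nat \<times> (nat \<Rightarrow> 'i \<Rightarrow> complex).
        \<forall>i\<in>I p. \<forall>j\<in>I p. A p i j = (\<Sum>s<fst nv. snd nv s i * cnj (snd nv s j))"
      by (intro exI[of _ "(N, v)"]) simp
  qed
  then obtain F :: "'p \<Rightarrow> nat \<times> (nat \<Rightarrow> 'i \<Rightarrow> complex)"
    where "\<forall>p\<in>P. \<forall>i\<in>I p. \<forall>j\<in>I p. A p i j = (\<Sum>s<fst (F p). snd (F p) s i * cnj (snd (F p) s j))"
    by (rule bchoice[elim_format]) blast
  then show ?thesis by (intro exI[of _ "\<lambda>p. fst (F p)"] exI[of _ "\<lambda>p. snd (F p)"])
qed

lemma psd_on_trace_zero:
  assumes "finite I" "psd_on I M" "Re (trace_on I M) = 0" "i \<in> I" "j \<in> I"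
  shows "M i j = 0"
proof -
  obtain N :: nat and v where v: "\<forall>i\<in>I. \<forall>j\<in>I. M i j = (\<Sum>t<N. v t i * cnj (v t j))"
    using psd_on_gram[OF assms(1,2)] by blast
  have "(\<Sum>i\<in>I. \<Sum>t<N. (Re (v t i))^2 + (Im (v t i))^2) = 0"
    using assms(3) v unfolding trace_on_def by (simp add: Re_sum power2_eq_square)
  then have "\<forall>i\<in>I. \<forall>t<N. (Re (v t i))^2 + (Im (v t i))^2 = 0"
    using assms(1) by (simp add: sum_nonneg_eq_0_iff sum_nonneg)
  then have "\<forall>i\<in>I. \<forall>t<N. v t i = 0"
    by (auto simp: complex_eq_iff add_nonneg_eq_0_iff)
  then show ?thesis using v assms(4,5) by simp
qed

lemma idop_simps:
  "idop i j * x = (if i = j then x else 0)" "x * idop i j = (if i = j then x else 0)"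
  "x * idop i j * y = (if i = j then x * y else 0)" "cnj (idop i j) = idop i j"
  "idop i j = idop j i"
  by (auto simp: idop_def)

lemma trace_mmult_cong:
  "(\<And>i j. i \<in> I \<Longrightarrow> j \<in> I \<Longrightarrow> A i j = A' i j) \<Longrightarrow> (\<And>i j. i \<in> I \<Longrightarrow> j \<in> I \<Longrightarrow> B i j = B' i j)
   \<Longrightarrow> trace_on I (mmult I A B) = trace_on I (mmult I A' B')"
  unfolding trace_on_def mmult_def by (intro sum.cong refl) auto

lemma trace_mmult_outer: "trace_on I (mmult I A (\<lambda>i j. u i * cnj (u j))) = qform I A u"
  unfolding trace_on_def mmult_def qform_def by (simp add: sum_distrib_left mult_ac)

lemma trace_mmult_sum_right:
  "trace_on I (mmult I A (\<lambda>i j. \<Sum>t\<in>T. B t i j)) = (\<Sum>t\<in>T. trace_on I (mmult I A (B t)))"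
  unfolding trace_on_def mmult_def by (simp add: sum_distrib_left sum.swap[of _ T])

lemma trace_mmult_diff_left:
  "trace_on I (mmult I (\<lambda>i j. B i j - C i j) A) = trace_on I (mmult I B A) - trace_on I (mmult I C A)"
  unfolding trace_on_def mmult_def by (simp add: algebra_simps sum_subtractf)

lemma trace_mmult_diff_right:
  "trace_on I (mmult I A (\<lambda>i j. B i j - C i j)) = trace_on I (mmult I A B) - trace_on I (mmult I A C)"
  unfolding trace_on_def mmult_def by (simp add: algebra_simps sum_subtractf)

lemma trace_mmult_scale_left:
  "trace_on I (mmult I (\<lambda>i j. c * B i j) A) = c * trace_on I (mmult I B A)"
  unfolding trace_on_def mmult_def by (simp add: algebra_simps sum_distrib_left)

lemma trace_mmult_scale_right:
  "trace_on I (mmult I A (\<lambda>i j. c * B i j)) = c * trace_on I (mmult I A B)"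
  unfolding trace_on_def mmult_def by (simp add: algebra_simps sum_distrib_left)

lemma trace_mmult_idop: "finite I \<Longrightarrow> trace_on I (mmult I A idop) = trace_on I A"
  unfolding trace_on_def mmult_def by (simp add: idop_simps)

lemma trace_mmult_psd_nonneg:
  assumes "finite I" "psd_on I A" "psd_on I B"
  shows "0 \<le> Re (trace_on I (mmult I A B))"
proof -
  obtain N :: nat and v where v: "\<forall>i\<in>I. \<forall>j\<in>I. B i j = (\<Sum>t<N. v t i * cnj (v t j))"
    using psd_on_gram[OF assms(1,3)] by blast
  have "trace_on I (mmult I A B) = trace_on I (mmult I A (\<lambda>i j. \<Sum>t<N. v t i * cnj (v t j)))"
    by (rule trace_mmult_cong) (use v in auto)
  also have "\<dots> = (\<Sum>t<N. qform I A (v t))" by (simp add: trace_mmult_sum_right trace_mmult_outer)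
  finally show ?thesis using assms(2) unfolding psd_on_iff_qform by (auto simp: Re_sum intro: sum_nonneg)
qed

lemma trace_psd_real_nonneg:
  assumes "finite I" "psd_on I A"
  shows "trace_on I A = complex_of_real (Re (trace_on I A))" "0 \<le> Re (trace_on I A)"
  using psd_on_diag[OF assms] unfolding trace_on_def
  by (auto simp: complex_eq_iff Im_sum Re_sum intro: sum_nonneg)

lemma psd_on_idop: "finite I \<Longrightarrow> psd_on I idop"
  by (rule psd_on_sum_outer[where T=I and v="\<lambda>t i. idop t i"]) (auto simp: idop_simps)

section \<open>Tensor products and local operations\<close>

lemma finite_gidx: "(\<And>k. k < m \<Longrightarrow> finite (S k)) \<Longrightarrow> finite (gidx m S)"
  unfolding gidx_def by (rule finite_PiE) auto

lemma gidx_memD: "f \<in> gidx m S \<Longrightarrow> k < m \<Longrightarrow> f k \<in> S k"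
  unfolding gidx_def by auto

lemma gidx_eqI: "f \<in> gidx m S \<Longrightarrow> g \<in> gidx m S \<Longrightarrow> (\<And>k. k < m \<Longrightarrow> f k = g k) \<Longrightarrow> f = g"
  unfolding gidx_def by (rule PiE_ext) auto

lemma sum_gidx_prod:
  assumes "\<And>k. k < m \<Longrightarrow> finite (S k)"
  shows "(\<Sum>f\<in>gidx m S. \<Prod>k<m. h k (f k)) = (\<Prod>k<m. \<Sum>i\<in>S k. h k i :: complex)"
  unfolding gidx_def by (rule prod_sum_PiE[symmetric]) (use assms in auto)

lemma ptensor_cong:
  assumes "\<And>k i j. k < m \<Longrightarrow> i \<in> S k \<Longrightarrow> j \<in> S k \<Longrightarrow> A k i j = B k i j" "f \<in> gidx m S" "g \<in> gidx m S"
  shows "ptensor m A f g = ptensor m B f g"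
  unfolding ptensor_def using assms(2,3) by (intro prod.cong refl assms(1)) (auto simp: gidx_memD)

definition prod_vec :: "nat \<Rightarrow> (nat \<Rightarrow> 'a \<Rightarrow> complex) \<Rightarrow> (nat \<Rightarrow> 'a) \<Rightarrow> complex" where
  "prod_vec m \<psi> f = (\<Prod>k<m. \<psi> k (f k))"

lemma ptensor_outer:
  "ptensor m (\<lambda>k i j. \<psi> k i * cnj (\<psi> k j)) f g = prod_vec m \<psi> f * cnj (prod_vec m \<psi> g)"
  unfolding ptensor_def prod_vec_def by (simp add: prod.distrib cnj_prod)

lemma idop_eq_ptensor:
  assumes "f \<in> gidx m S" "g \<in> gidx m S"
  shows "idop f g = ptensor m (\<lambda>_. idop) f g"
proof (cases "f = g")
  case True
  then show ?thesis by (simp add: idop_def ptensor_def)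
next
  case False
  then obtain k where "k < m" "f k \<noteq> g k" using gidx_eqI[OF assms] by blast
  then show ?thesis using False unfolding ptensor_def idop_def by (auto intro!: prod_zero)
qed

lemma ptensor_remove:
  assumes "k < m"
  shows "ptensor m A f g = A k (f k) (g k) * (\<Prod>k'\<in>{..<m} - {k}. A k' (f k') (g k'))"
  unfolding ptensor_def by (rule prod.remove) (use assms in auto)

lemma loc_lift_eq_ptensor:
  assumes "k < m"
  shows "loc_lift m k K = ptensor m (\<lambda>k'. if k' = k then K else idop)"
proof (intro ext)
  fix f' f
  have "(\<Prod>k'\<in>{..<m} - {k}. (if k' = k then K else idop) (f' k') (f k'))
      = (\<Prod>k'\<in>{..<m} - {k}. idop (f' k') (f k'))"
    by (rule prod.cong) auto
  then show "loc_lift m k K f' f = ptensor m (\<lambda>k'. if k' = k then K else idop) f' f"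
    unfolding loc_lift_def ptensor_remove[OF assms] by simp
qed

lemma qform_sandwich: "qform I (sandwich I' K P) v = qform I' P (\<lambda>i'. \<Sum>i\<in>I. K i' i * v i)"
proof -
  have "qform I (sandwich I' K P) v =
     (\<Sum>i\<in>I. \<Sum>j\<in>I. \<Sum>f'\<in>I'. \<Sum>g'\<in>I'. cnj (K f' i * v i) * P f' g' * (K g' j * v j))"
    unfolding qform_def sandwich_def by (simp add: sum_distrib_left sum_distrib_right mult_ac)
  also have "\<dots> = (\<Sum>f'\<in>I'. \<Sum>g'\<in>I'. \<Sum>i\<in>I. \<Sum>j\<in>I. cnj (K f' i * v i) * P f' g' * (K g' j * v j))"
    by (subst sum.swap, subst (2) sum.swap, subst (3) sum.swap, subst (2) sum.swap) (rule refl)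
  also have "\<dots> = qform I' P (\<lambda>i'. \<Sum>i\<in>I. K i' i * v i)"
    unfolding qform_def by (simp add: cnj_sum sum_distrib_left sum_distrib_right mult_ac)
  finally show ?thesis .
qed

lemma psd_on_sandwich: "psd_on I' P \<Longrightarrow> psd_on I (sandwich I' K P)"
  unfolding psd_on_iff_qform qform_sandwich by blast

lemma sandwich_sum:
  "sandwich I' K (\<lambda>i j. \<Sum>t\<in>T. P t i j) f g = (\<Sum>t\<in>T. sandwich I' K (P t) f g)"
  unfolding sandwich_def by (simp add: sum_distrib_left sum_distrib_right sum.swap[of _ T])

lemma sandwich_cong:
  "(\<And>i j. i \<in> I' \<Longrightarrow> j \<in> I' \<Longrightarrow> P i j = P' i j) \<Longrightarrow> sandwich I' K P f g = sandwich I' K P' f g"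
  unfolding sandwich_def by (intro sum.cong refl) auto

lemma sandwich_idop_left:
  assumes "finite I" "f \<in> I" "g \<in> I"
  shows "sandwich I idop P f g = P f g"
  using assms unfolding sandwich_def by (simp add: idop_simps)

lemma sandwich_idop_middle:
  "finite I' \<Longrightarrow> sandwich I' K idop f g = (\<Sum>i\<in>I'. cnj (K i f) * K i g)"
  unfolding sandwich_def by (simp add: idop_simps(3))

lemma sandwich_ptensor:
  assumes "\<And>k. k < m \<Longrightarrow> finite (S' k)"
  shows "sandwich (gidx m S') (ptensor m K) (ptensor m B) f g
    = ptensor m (\<lambda>k. sandwich (S' k) (K k) (B k)) f g"
proof -
  have "sandwich (gidx m S') (ptensor m K) (ptensor m B) f g =
     (\<Sum>f'\<in>gidx m S'. \<Sum>g'\<in>gidx m S'. \<Prod>k<m. cnj (K k (f' k) (f k)) * B k (f' k) (g' k) * K k (g' k) (g k))"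
    unfolding sandwich_def ptensor_def by (simp add: prod.distrib cnj_prod)
  also have "\<dots> = (\<Sum>f'\<in>gidx m S'. \<Prod>k<m. \<Sum>j\<in>S' k. cnj (K k (f' k) (f k)) * B k (f' k) j * K k j (g k))"
    by (intro sum.cong refl sum_gidx_prod assms)
  also have "\<dots> = (\<Prod>k<m. \<Sum>i\<in>S' k. \<Sum>j\<in>S' k. cnj (K k i (f k)) * B k i j * K k j (g k))"
    by (rule sum_gidx_prod[where h="\<lambda>k i. \<Sum>j\<in>S' k. cnj (K k i (f k)) * B k i j * K k j (g k)"]) (rule assms)
  finally show ?thesis unfolding ptensor_def sandwich_def .
qed

lemma sandwich_loc_lift_ptensor:
  assumes km: "k < m" and fin: "\<And>k. k < m \<Longrightarrow> finite (S k)" "finite S'"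
    and fg: "f \<in> gidx m S" "g \<in> gidx m S"
  shows "sandwich (gidx m (S(k := S'))) (loc_lift m k K) (ptensor m B) f g
    = ptensor m (B(k := sandwich S' K (B k))) f g"
proof -
  let ?K = "\<lambda>k'. if k' = k then K else idop"
  have "sandwich (gidx m (S(k := S'))) (loc_lift m k K) (ptensor m B) f g
      = ptensor m (\<lambda>k'. sandwich ((S(k := S')) k') (?K k') (B k')) f g"
    unfolding loc_lift_eq_ptensor[OF km] by (rule sandwich_ptensor) (use fin in auto)
  also have "\<dots> = ptensor m (B(k := sandwich S' K (B k))) f g"
  proof (rule ptensor_cong[OF _ fg])
    fix k' i j assume "k' < m" "i \<in> S k'" "j \<in> S k'"
    then show "sandwich ((S(k := S')) k') (?K k') (B k') i j = (B(k := sandwich S' K (B k))) k' i j"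
      using sandwich_idop_left[OF fin(1)] by (cases "k' = k") auto
  qed
  finally show ?thesis .
qed

section \<open>Separable operators and LOCC measurements\<close>

lemma sep_op_cong:
  assumes "\<And>f g. f \<in> gidx m S \<Longrightarrow> g \<in> gidx m S \<Longrightarrow> E f g = E' f g"
  shows "sep_op m S E \<longleftrightarrow> sep_op m S E'"
  unfolding sep_op_def using assms by simp

lemma sep_op_zero: "sep_op m S (\<lambda>_ _. 0)"
  unfolding sep_op_def by (intro exI[of _ 0]) auto

lemma sum_lessThan_add_nat: "(\<Sum>t<N1 + N2. h t) = (\<Sum>t<N1. h t) + (\<Sum>t<N2. h (N1 + t))"
  for h :: "nat \<Rightarrow> 'b::comm_monoid_add"
  by (induction N2) (auto simp: ac_simps)

lemma sep_op_add:
  assumes "sep_op m S E1" "sep_op m S E2"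
  shows "sep_op m S (\<lambda>f g. E1 f g + E2 f g)"
proof -
  obtain N1 :: nat and A1 where 1: "\<forall>t<N1. \<forall>k<m. psd_on (S k) (A1 t k)"
    "\<forall>f\<in>gidx m S. \<forall>g\<in>gidx m S. E1 f g = (\<Sum>t<N1. ptensor m (A1 t) f g)"
    using assms(1) unfolding sep_op_def by blast
  obtain N2 :: nat and A2 where 2: "\<forall>t<N2. \<forall>k<m. psd_on (S k) (A2 t k)"
    "\<forall>f\<in>gidx m S. \<forall>g\<in>gidx m S. E2 f g = (\<Sum>t<N2. ptensor m (A2 t) f g)"
    using assms(2) unfolding sep_op_def by blast
  define A where "A t = (if t < N1 then A1 t else A2 (t - N1))" for t
  have "(\<Sum>t<N1 + N2. ptensor m (A t) f g)
      = (\<Sum>t<N1. ptensor m (A1 t) f g) + (\<Sum>t<N2. ptensor m (A2 t) f g)" for f g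
    unfolding A_def sum_lessThan_add_nat by simp
  moreover have "\<forall>t<N1 + N2. \<forall>k<m. psd_on (S k) (A t k)"
    using 1(1) 2(1) unfolding A_def by auto
  ultimately show ?thesis
    unfolding sep_op_def using 1(2) 2(2) by (intro exI[of _ "N1 + N2"] exI[of _ A]) simp
qed

lemma sep_op_sum:
  "finite T \<Longrightarrow> \<forall>t\<in>T. sep_op m S (E t) \<Longrightarrow> sep_op m S (\<lambda>f g. \<Sum>t\<in>T. E t f g)"
  by (induction T rule: finite_induct) (auto intro: sep_op_zero sep_op_add)

lemma sep_op_ptensor: "\<forall>k<m. psd_on (S k) (A k) \<Longrightarrow> sep_op m S (ptensor m A)"
  unfolding sep_op_def by (rule exI[of _ 1], rule exI[of _ "\<lambda>_. A"]) auto

lemma sep_op_idop: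
  assumes "\<And>k. k < m \<Longrightarrow> finite (S k)"
  shows "sep_op m S idop"
  using sep_op_ptensor[of m S "\<lambda>_. idop"] assms psd_on_idop
  by (subst sep_op_cong[OF idop_eq_ptensor]) auto

text \<open>The scalar is absorbed into the factor of party \<open>0\<close>.\<close>
lemma sep_op_scale:
  assumes "sep_op m S E" "0 \<le> r" "0 < m"
  shows "sep_op m S (\<lambda>f g. complex_of_real r * E f g)"
proof -
  obtain N :: nat and A where A: "\<forall>t<N. \<forall>k<m. psd_on (S k) (A t k)"
    "\<forall>f\<in>gidx m S. \<forall>g\<in>gidx m S. E f g = (\<Sum>t<N. ptensor m (A t) f g)"
    using assms(1) unfolding sep_op_def by blast
  define A' where "A' t k = (if k = 0 then (\<lambda>i j. complex_of_real r * A t k i j) else A t k)" for t k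
  have "\<forall>t<N. \<forall>k<m. psd_on (S k) (A' t k)"
    using A(1) assms(2) unfolding A'_def psd_on_iff_qform by (simp add: qform_scale)
  moreover have "ptensor m (A' t) f g = complex_of_real r * ptensor m (A t) f g" for t f g
    unfolding ptensor_remove[OF assms(3)] unfolding A'_def by simp
  ultimately show ?thesis
    unfolding sep_op_def using A(2) by (intro exI[of _ N] exI[of _ A']) (simp add: sum_distrib_left)
qed

lemma sep_op_sandwich_loc_lift:
  assumes km: "k < m" and fin: "\<And>k. k < m \<Longrightarrow> finite (S k)" "finite S'"
    and sep: "sep_op m (S(k := S')) P"
  shows "sep_op m S (sandwich (gidx m (S(k := S'))) (loc_lift m k K) P)"
proof -
  let ?S = "S(k := S')"
  let ?K = "\<lambda>k'. if k' = k then K else idop"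
  obtain N :: nat and A where A: "\<forall>t<N. \<forall>k<m. psd_on (?S k) (A t k)"
    "\<forall>f\<in>gidx m ?S. \<forall>g\<in>gidx m ?S. P f g = (\<Sum>t<N. ptensor m (A t) f g)"
    using sep unfolding sep_op_def by blast
  have "sandwich (gidx m ?S) (loc_lift m k K) P f g
      = (\<Sum>t<N. sandwich (gidx m ?S) (ptensor m ?K) (ptensor m (A t)) f g)" for f g
    unfolding loc_lift_eq_ptensor[OF km] sandwich_sum[symmetric]
    by (rule sandwich_cong) (use A(2) in auto)
  also have "\<dots> f g = (\<Sum>t<N. ptensor m (\<lambda>k'. sandwich (?S k') (?K k') (A t k')) f g)" for f g
    by (intro sum.cong refl sandwich_ptensor) (use fin in auto)
  finally have "\<forall>f\<in>gidx m S. \<forall>g\<in>gidx m S. sandwich (gidx m ?S) (loc_lift m k K) P f g =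
        (\<Sum>t<N. ptensor m (\<lambda>k'. sandwich (?S k') (?K k') (A t k')) f g)" by blast
  moreover have "\<forall>t<N. \<forall>k'<m. psd_on (S k') (sandwich (?S k') (?K k') (A t k'))"
    using A(1) by (blast intro: psd_on_sandwich)
  ultimately show ?thesis
    unfolding sep_op_def by (intro exI[of _ N] exI[of _ "\<lambda>t k'. sandwich (?S k') (?K k') (A t k')"]) simp
qed

lemma sum_UNION_Cons:
  assumes "finite A" "\<forall>a\<in>A. finite (Os a)"
  shows "(\<Sum>w\<in>(\<Union>a\<in>A. Cons a ` Os a). h w) = (\<Sum>a\<in>A. \<Sum>w\<in>Os a. h (a # w))"
proof -
  have "(\<Sum>w\<in>(\<Union>a\<in>A. Cons a ` Os a). h w) = (\<Sum>a\<in>A. \<Sum>w\<in>Cons a ` Os a. h w)"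
    by (rule sum.UNION_disjoint) (use assms in auto)
  also have "\<dots> = (\<Sum>a\<in>A. \<Sum>w\<in>Os a. h (a # w))"
    by (rule sum.cong[OF refl]) (simp add: sum.reindex inj_on_def)
  finally show ?thesis .
qed

lemma kraus_complete_loc_lift:
  assumes km: "k < m" and fin: "\<And>k. k < m \<Longrightarrow> finite (S k)" "finite S'"
    and K: "kraus_complete (S k) S' A K" and fg: "f \<in> gidx m S" "g \<in> gidx m S"
  shows "(\<Sum>a\<in>A. sandwich (gidx m (S(k := S'))) (loc_lift m k (K a)) idop f g) = idop f g"
proof -
  have "sandwich (gidx m (S(k := S'))) (loc_lift m k (K a)) idop f g
      = (\<Sum>i\<in>S'. cnj (K a i (f k)) * K a i (g k)) * (\<Prod>k'\<in>{..<m} - {k}. idop (f k') (g k'))" for a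
  proof -
    have "sandwich (gidx m (S(k := S'))) (loc_lift m k (K a)) idop f g
        = sandwich (gidx m (S(k := S'))) (loc_lift m k (K a)) (ptensor m (\<lambda>_. idop)) f g"
      by (rule sandwich_cong) (rule idop_eq_ptensor)
    also have "\<dots> = ptensor m ((\<lambda>_. idop)(k := sandwich S' (K a) idop)) f g"
      by (rule sandwich_loc_lift_ptensor[OF km fin fg])
    also have "\<dots> = (\<Sum>i\<in>S'. cnj (K a i (f k)) * K a i (g k)) * (\<Prod>k'\<in>{..<m} - {k}. idop (f k') (g k'))"
      unfolding ptensor_remove[OF km] sandwich_idop_middle[OF fin(2)] by (auto intro!: prod.cong)
    finally show ?thesis .
  qed
  then have "(\<Sum>a\<in>A. sandwich (gidx m (S(k := S'))) (loc_lift m k (K a)) idop f g)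
      = (\<Sum>a\<in>A. \<Sum>i\<in>S'. cnj (K a i (f k)) * K a i (g k)) * (\<Prod>k'\<in>{..<m} - {k}. idop (f k') (g k'))"
    by (simp add: sum_distrib_right)
  also have "\<dots> = ptensor m (\<lambda>_. idop) f g"
    using K gidx_memD[OF fg(1) km] gidx_memD[OF fg(2) km]
    unfolding ptensor_remove[OF km] kraus_complete_def by simp
  also have "\<dots> = idop f g" using idop_eq_ptensor[OF fg] ..
  finally show ?thesis .
qed

lemma loccp_sep_povm:
  assumes "loccp m S Ws P" "\<And>k. k < m \<Longrightarrow> finite (S k)"
  shows "finite Ws \<and> (\<forall>w\<in>Ws. sep_op m S (P w) \<and> psd_on (gidx m S) (P w)) \<and>
    (\<forall>f\<in>gidx m S. \<forall>g\<in>gidx m S. (\<Sum>w\<in>Ws. P w f g) = idop f g)"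
  using assms
proof (induction rule: loccp.induct)
  case (triv S)
  then show ?case using sep_op_idop[OF triv] psd_on_idop[OF finite_gidx[OF triv]] by auto
next
  case (step k A S' S K Os Ps)
  let ?S = "S(k := S')"
  let ?G = "gidx m ?S"
  let ?P = "\<lambda>w. sandwich ?G (loc_lift m k (K (hd w))) (Ps (hd w) (tl w))"
  have IH: "finite (Os a)" "\<forall>w\<in>Os a. sep_op m ?S (Ps a w) \<and> psd_on ?G (Ps a w)"
      "\<forall>f\<in>?G. \<forall>g\<in>?G. (\<Sum>w\<in>Os a. Ps a w f g) = idop f g" if "a \<in> A" for a
  proof -
    have "\<And>k'. k' < m \<Longrightarrow> finite (?S k')" using step.hyps(3) step.prems by simp
    then show "finite (Os a)" "\<forall>w\<in>Os a. sep_op m ?S (Ps a w) \<and> psd_on ?G (Ps a w)"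
      "\<forall>f\<in>?G. \<forall>g\<in>?G. (\<Sum>w\<in>Os a. Ps a w f g) = idop f g"
      using step.IH that by blast+
  qed
  have "sep_op m S (?P w) \<and> psd_on (gidx m S) (?P w)" if "w \<in> (\<Union>a\<in>A. Cons a ` Os a)" for w
    using that IH(2) sep_op_sandwich_loc_lift[OF step.hyps(1) step.prems step.hyps(3)] psd_on_sandwich
    by fastforce
  moreover have "(\<Sum>w\<in>(\<Union>a\<in>A. Cons a ` Os a). ?P w f g) = idop f g"
    if fg: "f \<in> gidx m S" "g \<in> gidx m S" for f g
  proof -
    have "(\<Sum>w\<in>(\<Union>a\<in>A. Cons a ` Os a). ?P w f g)
        = (\<Sum>a\<in>A. sandwich ?G (loc_lift m k (K a)) (\<lambda>f g. \<Sum>w\<in>Os a. Ps a w f g) f g)"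
      by (subst sum_UNION_Cons) (use IH(1) step.hyps(2) in \<open>auto simp: sandwich_sum\<close>)
    also have "\<dots> = (\<Sum>a\<in>A. sandwich ?G (loc_lift m k (K a)) idop f g)"
      by (intro sum.cong refl sandwich_cong) (use IH(3) in auto)
    also have "\<dots> = idop f g"
      by (rule kraus_complete_loc_lift[OF step.hyps(1) step.prems step.hyps(3,4) fg])
    finally show ?thesis .
  qed
  ultimately show ?case using IH(1) step.hyps(2) by auto
qed

lemma locc_povm_imp_sep_povm:
  assumes "locc_povm m S C M" "finite C" "\<And>k. k < m \<Longrightarrow> finite (S k)"
  shows "povm_on (gidx m S) C M \<and> sep_povm m S C M"
proof -
  obtain Ws P and g :: "nat list \<Rightarrow> 'b" where W: "loccp m S Ws P" "g ` Ws \<subseteq> C"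
    "\<forall>c\<in>C. \<forall>f\<in>gidx m S. \<forall>h\<in>gidx m S. M c f h = (\<Sum>w\<in>{w\<in>Ws. g w = c}. P w f h)"
    using assms(1) unfolding locc_povm_def by blast
  have L: "finite Ws" "\<forall>w\<in>Ws. sep_op m S (P w) \<and> psd_on (gidx m S) (P w)"
    "\<forall>f\<in>gidx m S. \<forall>g\<in>gidx m S. (\<Sum>w\<in>Ws. P w f g) = idop f g"
    using loccp_sep_povm[OF W(1) assms(3)] by blast+
  have "psd_on (gidx m S) (M c) \<and> sep_op m S (M c)" if c: "c \<in> C" for c
  proof -
    have "psd_on (gidx m S) (\<lambda>f h. \<Sum>w\<in>{w\<in>Ws. g w = c}. P w f h)"
      "sep_op m S (\<lambda>f h. \<Sum>w\<in>{w\<in>Ws. g w = c}. P w f h)"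
      using L(1,2) by (auto intro!: psd_on_sum sep_op_sum)
    moreover have "psd_on (gidx m S) (M c) \<longleftrightarrow> psd_on (gidx m S) (\<lambda>f h. \<Sum>w\<in>{w\<in>Ws. g w = c}. P w f h)"
      "sep_op m S (M c) \<longleftrightarrow> sep_op m S (\<lambda>f h. \<Sum>w\<in>{w\<in>Ws. g w = c}. P w f h)"
      using W(3) c by (auto intro!: psd_on_cong sep_op_cong)
    ultimately show ?thesis by blast
  qed
  moreover have "(\<Sum>c\<in>C. M c f h) = idop f h" if "f \<in> gidx m S" "h \<in> gidx m S" for f h
  proof -
    have "(\<Sum>c\<in>C. M c f h) = (\<Sum>c\<in>C. \<Sum>w\<in>{w\<in>Ws. g w = c}. P w f h)"
      using W(3) that by simp
    also have "\<dots> = (\<Sum>w\<in>Ws. P w f h)" by (rule sum.group) (use L W assms in auto)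
    finally show ?thesis using L that by simp
  qed
  ultimately show ?thesis unfolding povm_on_def sep_povm_def using assms(2) by blast
qed

section \<open>Success probabilities and block positivity\<close>

lemma psucc_le_sum_prob:
  assumes "povm_on (gidx m S) C M" "\<And>k. k < m \<Longrightarrow> finite (S k)"
    "\<forall>c\<in>C. 0 \<le> \<eta> c" "\<forall>c\<in>C. psd_on (gidx m S) (\<rho> c) \<and> trace_on (gidx m S) (\<rho> c) = 1"
  shows "psucc (gidx m S) C \<eta> \<rho> M \<le> (\<Sum>c\<in>C. \<eta> c)"
proof -
  let ?G = "gidx m S"
  have finG: "finite ?G" by (rule finite_gidx) (use assms in auto)
  have finC: "finite C" using assms(1) unfolding povm_on_def by blast
  have le1: "Re (trace_on ?G (mmult ?G (\<rho> c) (M c))) \<le> 1" if c: "c \<in> C" for c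
  proof -
    have "(\<Sum>c'\<in>C. trace_on ?G (mmult ?G (\<rho> c) (M c'))) = trace_on ?G (mmult ?G (\<rho> c) idop)"
      unfolding trace_mmult_sum_right[symmetric]
      by (rule trace_mmult_cong) (use assms(1) in \<open>auto simp: povm_on_def\<close>)
    also have "\<dots> = 1" using trace_mmult_idop[OF finG] assms(4) c by simp
    finally have "(\<Sum>c'\<in>C. Re (trace_on ?G (mmult ?G (\<rho> c) (M c')))) = 1"
      by (metis Re_sum one_complex.sel)
    moreover have "\<forall>c'\<in>C. 0 \<le> Re (trace_on ?G (mmult ?G (\<rho> c) (M c')))"
      using trace_mmult_psd_nonneg[OF finG] assms(1,4) c unfolding povm_on_def by blast
    moreover have "Re (trace_on ?G (mmult ?G (\<rho> c) (M c))) \<le> (\<Sum>c'\<in>C. Re (trace_on ?G (mmult ?G (\<rho> c) (M c'))))"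
      by (rule member_le_sum) (use c calculation(2) finC in auto)
    ultimately show ?thesis by linarith
  qed
  show ?thesis unfolding psucc_def
    by (rule sum_mono) (use le1 assms(3) in \<open>auto intro: mult_left_le\<close>)
qed

definition guess_povm :: "'c \<Rightarrow> 'c \<Rightarrow> 'i op" where
  "guess_povm x c = (if c = x then idop else (\<lambda>_ _. 0))"

lemma locc_povm_guess: "x \<in> C \<Longrightarrow> locc_povm m S C (guess_povm x)"
  unfolding locc_povm_def
  by (rule exI[of _ "{[]}"], rule exI[of _ "\<lambda>_. idop"], rule exI[of _ "\<lambda>_. x"])
     (auto intro: loccp.triv simp: guess_povm_def)

lemma psucc_guess_povm:
  assumes "x \<in> C" "finite C" "trace_on (gidx m S) (\<rho> x) = 1" "\<And>k. k < m \<Longrightarrow> finite (S k)"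
  shows "psucc (gidx m S) C \<eta> \<rho> (guess_povm x) = \<eta> x"
proof -
  have "psucc (gidx m S) C \<eta> \<rho> (guess_povm x) = (\<Sum>c\<in>C. if c = x then \<eta> x else 0)"
    unfolding psucc_def
  proof (rule sum.cong[OF refl])
    fix c
    show "\<eta> c * Re (trace_on (gidx m S) (mmult (gidx m S) (\<rho> c) (guess_povm x c))) = (if c = x then \<eta> x else 0)"
    proof (cases "c = x")
      case True
      then show ?thesis using assms(3) trace_mmult_idop[OF finite_gidx[OF assms(4)]] by (simp add: guess_povm_def)
    next
      case False
      then show ?thesis by (simp add: guess_povm_def trace_on_def mmult_def)
    qed
  qed
  then show ?thesis using assms(1,2) by simp
qed

text \<open>Rescaling a nonzero positive separable operator by its trace gives a separable state.\<close>
lemma sep_dual_trace_nonneg: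
  assumes fin: "\<And>k. k < m \<Longrightarrow> finite (S k)" and m: "0 < m" and E: "sep_dual m S E"
    and sep: "sep_op m S A" and psd: "psd_on (gidx m S) A"
  shows "0 \<le> Re (trace_on (gidx m S) (mmult (gidx m S) E A))"
proof -
  let ?G = "gidx m S"
  have finG: "finite ?G" by (rule finite_gidx[OF fin])
  define t where "t = Re (trace_on ?G A)"
  show ?thesis
  proof (cases "t = 0")
    case True
    then have "\<forall>i\<in>?G. \<forall>j\<in>?G. A i j = 0" using psd_on_trace_zero[OF finG psd] t_def by auto
    then show ?thesis unfolding trace_on_def mmult_def by simp
  next
    case False
    then have tp: "t > 0" using trace_psd_real_nonneg(2)[OF finG psd] t_def by simp
    define \<sigma> where "\<sigma> f g = complex_of_real (1 / t) * A f g" for f g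
    have "trace_on ?G \<sigma> = complex_of_real (1 / t) * trace_on ?G A"
      unfolding \<sigma>_def trace_on_def by (simp add: sum_distrib_left)
    also have "trace_on ?G A = complex_of_real t"
      unfolding t_def by (rule trace_psd_real_nonneg(1)[OF finG psd])
    finally have "trace_on ?G \<sigma> = 1" using tp by simp
    moreover have "sep_op m S \<sigma>" unfolding \<sigma>_def by (rule sep_op_scale[OF sep _ m]) (use tp in simp)
    ultimately have "sep_state m S \<sigma>" unfolding sep_state_def by blast
    then have "0 \<le> Re (trace_on ?G (mmult ?G E \<sigma>))" using E unfolding sep_dual_def by blast
    also have "trace_on ?G (mmult ?G E \<sigma>) = complex_of_real (1 / t) * trace_on ?G (mmult ?G E A)"
      unfolding \<sigma>_def by (rule trace_mmult_scale_right)
    finally show ?thesis using tp by (simp add: zero_le_divide_iff)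
  qed
qed

lemma psucc_le_if_sep_dual:
  assumes fin: "\<And>k. k < m \<Longrightarrow> finite (S k)" and m: "0 < m"
    and x: "trace_on (gidx m S) (\<rho> x) = 1"
    and E: "\<forall>c\<in>C. sep_dual m S (\<lambda>f g. complex_of_real (\<eta> x) * \<rho> x f g - complex_of_real (\<eta> c) * \<rho> c f g)"
    and M: "povm_on (gidx m S) C M" "sep_povm m S C M"
  shows "psucc (gidx m S) C \<eta> \<rho> M \<le> \<eta> x"
proof -
  let ?G = "gidx m S"
  let ?T = "\<lambda>c c'. Re (trace_on ?G (mmult ?G (\<rho> c) (M c')))"
  have finG: "finite ?G" by (rule finite_gidx[OF fin])
  have "\<eta> c * ?T c c \<le> \<eta> x * ?T x c" if c: "c \<in> C" for c
  proof -
    have "0 \<le> Re (trace_on ?G (mmult ?G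
        (\<lambda>f g. complex_of_real (\<eta> x) * \<rho> x f g - complex_of_real (\<eta> c) * \<rho> c f g) (M c)))"
      using sep_dual_trace_nonneg[of m S, OF fin m] E M c unfolding povm_on_def sep_povm_def by blast
    then show ?thesis by (simp add: trace_mmult_diff_left trace_mmult_scale_left)
  qed
  then have "psucc ?G C \<eta> \<rho> M \<le> (\<Sum>c\<in>C. \<eta> x * ?T x c)"
    unfolding psucc_def by (rule sum_mono)
  also have "\<dots> = \<eta> x * Re (trace_on ?G (mmult ?G (\<rho> x) (\<lambda>i j. \<Sum>c\<in>C. M c i j)))"
    by (simp add: sum_distrib_left Re_sum trace_mmult_sum_right)
  also have "trace_on ?G (mmult ?G (\<rho> x) (\<lambda>i j. \<Sum>c\<in>C. M c i j)) = trace_on ?G (mmult ?G (\<rho> x) idop)"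
    by (rule trace_mmult_cong) (use M(1) in \<open>auto simp: povm_on_def\<close>)
  also have "\<dots> = 1" using trace_mmult_idop[OF finG] x by simp
  finally show ?thesis by simp
qed

lemma sep_op_sum_prod_outer:
  assumes fin: "\<And>k. k < m \<Longrightarrow> finite (S k)" and sep: "sep_op m S \<sigma>"
  shows "\<exists>T :: (nat \<times> (nat \<Rightarrow> nat)) set. \<exists>\<Psi>. finite T \<and> (\<forall>f\<in>gidx m S. \<forall>g\<in>gidx m S.
       \<sigma> f g = (\<Sum>p\<in>T. prod_vec m (\<Psi> p) f * cnj (prod_vec m (\<Psi> p) g)))"
proof -
  obtain N :: nat and A where A: "\<forall>t<N. \<forall>k<m. psd_on (S k) (A t k)"
    "\<forall>f\<in>gidx m S. \<forall>g\<in>gidx m S. \<sigma> f g = (\<Sum>t<N. ptensor m (A t) f g)"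
    using sep unfolding sep_op_def by blast
  have "\<forall>p\<in>{..<N} \<times> {..<m}. finite (S (snd p)) \<and> psd_on (S (snd p)) (A (fst p) (snd p))"
    using fin A(1) by auto
  from psd_on_gram_family[OF this]
  obtain n :: "nat \<times> nat \<Rightarrow> nat" and v where nv: "\<forall>p\<in>{..<N} \<times> {..<m}. \<forall>i\<in>S (snd p). \<forall>j\<in>S (snd p).
      A (fst p) (snd p) i j = (\<Sum>s<n p. v p s i * cnj (v p s j))"
    by blast
  have nv': "A t k i j = (\<Sum>s<n (t, k). v (t, k) s i * cnj (v (t, k) s j))"
    if "t < N" "k < m" "i \<in> S k" "j \<in> S k" for t k i j
    using nv[rule_format, of "(t, k)"] that by simp
  let ?P = "\<lambda>t. PiE {..<m} (\<lambda>k. {..<n (t, k)})"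
  let ?\<Psi> = "\<lambda>p k. v (fst p, k) (snd p k)"
  have eq: "\<sigma> f g = (\<Sum>p\<in>Sigma {..<N} ?P. prod_vec m (?\<Psi> p) f * cnj (prod_vec m (?\<Psi> p) g))"
    if fg: "f \<in> gidx m S" "g \<in> gidx m S" for f g
  proof -
    have "\<sigma> f g = (\<Sum>t<N. \<Prod>k<m. \<Sum>s<n (t, k). v (t, k) s (f k) * cnj (v (t, k) s (g k)))"
      using A(2) fg unfolding ptensor_def
      by (auto intro!: sum.cong prod.cong nv' gidx_memD[OF fg(1)] gidx_memD[OF fg(2)])
    also have "\<dots> = (\<Sum>t<N. \<Sum>\<tau>\<in>?P t. \<Prod>k<m. v (t, k) (\<tau> k) (f k) * cnj (v (t, k) (\<tau> k) (g k)))"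
      by (intro sum.cong refl prod_sum_PiE) auto
    also have "\<dots> = (\<Sum>p\<in>Sigma {..<N} ?P. prod_vec m (?\<Psi> p) f * cnj (prod_vec m (?\<Psi> p) g))"
      unfolding prod_vec_def by (subst sum.Sigma) (auto simp: prod.distrib cnj_prod case_prod_beta intro!: finite_PiE)
    finally show ?thesis .
  qed
  have "finite (Sigma {..<N} ?P)" by (intro finite_SigmaI finite_PiE) auto
  with eq show ?thesis by (intro exI[of _ "Sigma {..<N} ?P"] exI[of _ ?\<Psi>] conjI ballI)
qed

lemma sep_dual_iff_prod_vec:
  assumes fin: "\<And>k. k < m \<Longrightarrow> finite (S k)" and m: "0 < m" and herm: "hermitian_on (gidx m S) E"
  shows "sep_dual m S E \<longleftrightarrow> (\<forall>\<psi>. 0 \<le> Re (qform (gidx m S) E (prod_vec m \<psi>)))"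
proof
  let ?G = "gidx m S"
  assume E: "sep_dual m S E"
  show "\<forall>\<psi>. 0 \<le> Re (qform ?G E (prod_vec m \<psi>))"
  proof
    fix \<psi> :: "nat \<Rightarrow> 'a \<Rightarrow> complex"
    let ?A = "ptensor m (\<lambda>k i j. \<psi> k i * cnj (\<psi> k j))"
    have "sep_op m S ?A" by (rule sep_op_ptensor) (auto intro: psd_on_outer)
    moreover have "psd_on ?G ?A" unfolding ptensor_outer by (rule psd_on_outer)
    ultimately have "0 \<le> Re (trace_on ?G (mmult ?G E ?A))" using sep_dual_trace_nonneg[of m S E] fin m E by blast
    then show "0 \<le> Re (qform ?G E (prod_vec m \<psi>))" unfolding ptensor_outer trace_mmult_outer .
  qed
next
  let ?G = "gidx m S"
  assume pv: "\<forall>\<psi>. 0 \<le> Re (qform ?G E (prod_vec m \<psi>))"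
  have "0 \<le> Re (trace_on ?G (mmult ?G E \<sigma>))" if "sep_state m S \<sigma>" for \<sigma>
  proof -
    have "sep_op m S \<sigma>" using that unfolding sep_state_def by blast
    then obtain T :: "(nat \<times> (nat \<Rightarrow> nat)) set" and \<Psi> where T: "finite T"
      "\<forall>f\<in>?G. \<forall>g\<in>?G. \<sigma> f g = (\<Sum>p\<in>T. prod_vec m (\<Psi> p) f * cnj (prod_vec m (\<Psi> p) g))"
      using sep_op_sum_prod_outer[of m S, OF fin] by blast
    have "trace_on ?G (mmult ?G E \<sigma>) = (\<Sum>p\<in>T. qform ?G E (prod_vec m (\<Psi> p)))"
      unfolding trace_mmult_outer[symmetric] trace_mmult_sum_right[symmetric]
      by (rule trace_mmult_cong) (use T in auto)
    then show ?thesis using pv by (simp add: Re_sum sum_nonneg)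
  qed
  then show "sep_dual m S E" using herm unfolding sep_dual_def by blast
qed

lemma hermitian_on_weighted_diff:
  assumes "finite G" "psd_on G A" "psd_on G B"
  shows "hermitian_on G (\<lambda>f g. complex_of_real a * A f g - complex_of_real b * B f g)"
  unfolding hermitian_on_def
proof (intro ballI)
  fix i j assume "i \<in> G" "j \<in> G"
  then have "A i j = cnj (A j i)" "B i j = cnj (B j i)"
    using psd_on_hermitian[OF assms(1,2), of j i] psd_on_hermitian[OF assms(1,3), of j i] by simp_all
  then show "complex_of_real a * A i j - complex_of_real b * B i j
      = cnj (complex_of_real a * A j i - complex_of_real b * B j i)"
    by simp
qed

section \<open>An LOCC measurement testing for a product vector\<close>

definition proj_kraus :: "(nat \<Rightarrow> 'a \<Rightarrow> complex) \<Rightarrow> nat \<Rightarrow> nat \<Rightarrow> 'a op" where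
  "proj_kraus \<phi> k a = (if a = 0 then (\<lambda>i j. \<phi> k i * cnj (\<phi> k j))
     else (\<lambda>i j. idop i j - \<phi> k i * cnj (\<phi> k j)))"

lemma proj_kraus_idem:
  assumes "finite T" "(\<Sum>i\<in>T. cnj (\<phi> k i) * \<phi> k i) = 1" "i \<in> T" "j \<in> T"
  shows "(\<Sum>i'\<in>T. cnj (proj_kraus \<phi> k a i' i) * proj_kraus \<phi> k a i' j) = proj_kraus \<phi> k a i j"
proof -
  let ?P = "\<lambda>i j. \<phi> k i * cnj (\<phi> k j)"
  have "(\<Sum>i'\<in>T. cnj (?P i' i) * ?P i' j) = ?P i j * (\<Sum>i'\<in>T. cnj (\<phi> k i') * \<phi> k i')"
    by (simp add: sum_distrib_left mult_ac)
  then have P: "(\<Sum>i'\<in>T. cnj (?P i' i) * ?P i' j) = ?P i j" using assms(2) by simp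
  show ?thesis
  proof (cases "a = 0")
    case True
    then show ?thesis using P by (simp add: proj_kraus_def)
  next
    case False
    have "(\<Sum>i'\<in>T. cnj (idop i' i - ?P i' i) * (idop i' j - ?P i' j)) =
       (\<Sum>i'\<in>T. idop i' i * idop i' j) - (\<Sum>i'\<in>T. idop i' i * ?P i' j) - (\<Sum>i'\<in>T. cnj (?P i' i) * idop i' j)
         + (\<Sum>i'\<in>T. cnj (?P i' i) * ?P i' j)"
      by (simp add: algebra_simps sum_subtractf sum.distrib idop_simps(4))
    also have "\<dots> = idop i j - ?P i j"
      using assms P by (simp add: idop_simps(1,2,5))
    finally show ?thesis using False by (simp add: proj_kraus_def)
  qed
qed

lemma kraus_complete_proj_kraus:
  assumes "finite T" "(\<Sum>i\<in>T. cnj (\<phi> k i) * \<phi> k i) = 1"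
  shows "kraus_complete T T {0, 1} (proj_kraus \<phi> k)"
  unfolding kraus_complete_def using proj_kraus_idem[where \<phi>=\<phi> and k=k, OF assms] by (simp add: proj_kraus_def)

lemma sandwich_proj_kraus_idop:
  assumes "finite T" "(\<Sum>i\<in>T. cnj (\<phi> k i) * \<phi> k i) = 1" "i \<in> T" "j \<in> T"
  shows "sandwich T (proj_kraus \<phi> k a) idop i j = proj_kraus \<phi> k a i j"
  using sandwich_idop_middle[OF assms(1)] proj_kraus_idem[where \<phi>=\<phi> and k=k, OF assms] by simp

definition bit_words :: "nat \<Rightarrow> nat list set" where
  "bit_words r = {w. length w = r \<and> set w \<subseteq> {0, 1}}"

lemma bit_words_0: "bit_words 0 = {[]}"
  unfolding bit_words_def by auto

lemma bit_words_Suc: "bit_words (Suc r) = (\<Union>a\<in>{0, 1}. Cons a ` bit_words r)"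
  unfolding bit_words_def by (auto simp: length_Suc_conv)

text \<open>Parties \<open>j, \<dots>, m - 1\<close> measure in turn; the measuring party \<open>j\<close> is generalised for
  the induction on the number \<open>r\<close> of remaining parties.\<close>
lemma loccp_local_projections:
  assumes fin: "\<And>k. k < m \<Longrightarrow> finite (S k)"
    and nrm: "\<And>k. k < m \<Longrightarrow> (\<Sum>i\<in>S k. cnj (\<phi> k i) * \<phi> k i) = 1"
  shows "j + r = m \<Longrightarrow> \<exists>P. loccp m S (bit_words r) P \<and> (\<forall>w\<in>bit_words r. \<forall>f\<in>gidx m S. \<forall>g\<in>gidx m S.
     P w f g = ptensor m (\<lambda>k. if j \<le> k then proj_kraus \<phi> k (w ! (k - j)) else idop) f g)"
proof (induction r arbitrary: j)
  case 0
  have "idop f g = ptensor m (\<lambda>k. if j \<le> k then proj_kraus \<phi> k ([] ! (k - j)) else idop) f g"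
    if "f \<in> gidx m S" "g \<in> gidx m S" for f g
    unfolding idop_eq_ptensor[OF that] ptensor_def using 0 by (intro prod.cong refl) auto
  then show ?case unfolding bit_words_0 by (intro exI[of _ "\<lambda>_. idop"]) (auto intro: loccp.triv)
next
  case (Suc r)
  then have jm: "j < m" by simp
  obtain P where P: "loccp m S (bit_words r) P" "\<forall>w\<in>bit_words r. \<forall>f\<in>gidx m S. \<forall>g\<in>gidx m S.
     P w f g = ptensor m (\<lambda>k. if Suc j \<le> k then proj_kraus \<phi> k (w ! (k - Suc j)) else idop) f g"
    using Suc.IH[of "Suc j"] Suc.prems by auto
  let ?Q = "\<lambda>w. sandwich (gidx m S) (loc_lift m j (proj_kraus \<phi> j (hd w))) (P (tl w))"
  have "loccp m S (\<Union>a\<in>{0, 1}. Cons a ` bit_words r)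
      (\<lambda>w. sandwich (gidx m (S(j := S j))) (loc_lift m j (proj_kraus \<phi> j (hd w))) ((\<lambda>_. P) (hd w) (tl w)))"
    by (rule loccp.step) (use P(1) jm fin kraus_complete_proj_kraus[OF fin nrm] in auto)
  then have "loccp m S (bit_words (Suc r)) ?Q" unfolding bit_words_Suc by simp
  moreover have "?Q w f g = ptensor m (\<lambda>k. if j \<le> k then proj_kraus \<phi> k (w ! (k - j)) else idop) f g"
    if w: "w \<in> bit_words (Suc r)" and fg: "f \<in> gidx m S" "g \<in> gidx m S" for w f g
  proof -
    obtain a w' where aw: "w = a # w'" "w' \<in> bit_words r" using w unfolding bit_words_Suc by auto
    let ?B = "\<lambda>k. if Suc j \<le> k then proj_kraus \<phi> k (w' ! (k - Suc j)) else idop"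
    have "?Q w f g = sandwich (gidx m (S(j := S j))) (loc_lift m j (proj_kraus \<phi> j a)) (ptensor m ?B) f g"
      unfolding aw(1) by (simp, rule sandwich_cong) (use P(2) aw(2) in auto)
    also have "\<dots> = ptensor m (?B(j := sandwich (S j) (proj_kraus \<phi> j a) (?B j))) f g"
      by (rule sandwich_loc_lift_ptensor[OF jm fin fin[OF jm] fg])
    also have "\<dots> = ptensor m (\<lambda>k. if j \<le> k then proj_kraus \<phi> k (w ! (k - j)) else idop) f g"
    proof (rule ptensor_cong[OF _ fg])
      fix k i i' assume k: "k < m" "i \<in> S k" "i' \<in> S k"
      have "w ! (k - j) = w' ! (k - Suc j)" if "j < k"
        using that unfolding aw(1) by (simp add: Suc_diff_Suc)
      then show "(?B(j := sandwich (S j) (proj_kraus \<phi> j a) (?B j))) k i i'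
          = (if j \<le> k then proj_kraus \<phi> k (w ! (k - j)) else idop) i i'"
        using sandwich_proj_kraus_idop[where \<phi>=\<phi> and k=k, OF fin[OF k(1)] nrm[OF k(1)] k(2,3)]
        by (cases "k = j") (auto simp: aw(1))
    qed
    finally show ?thesis .
  qed
  ultimately show ?case by blast
qed

lemma locc_povm_product_test:
  assumes fin: "\<And>k. k < m \<Longrightarrow> finite (S k)"
    and nrm: "\<And>k. k < m \<Longrightarrow> (\<Sum>i\<in>S k. cnj (\<phi> k i) * \<phi> k i) = 1"
    and C: "x \<in> C" "c \<in> C" "c \<noteq> x"
  shows "\<exists>M. locc_povm m S C M
    \<and> (\<forall>f\<in>gidx m S. \<forall>h\<in>gidx m S. M c f h = prod_vec m \<phi> f * cnj (prod_vec m \<phi> h)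
        \<and> M x f h = idop f h - prod_vec m \<phi> f * cnj (prod_vec m \<phi> h))
    \<and> (\<forall>c'. c' \<noteq> x \<and> c' \<noteq> c \<longrightarrow> M c' = (\<lambda>_ _. 0))"
proof -
  let ?G = "gidx m S"
  obtain P where P: "loccp m S (bit_words m) P" "\<forall>w\<in>bit_words m. \<forall>f\<in>?G. \<forall>g\<in>?G.
     P w f g = ptensor m (\<lambda>k. proj_kraus \<phi> k (w ! k)) f g"
    using loccp_local_projections[where m=m and S=S and \<phi>=\<phi> and j=0 and r=m, OF fin nrm] by auto
  have finW: "finite (bit_words m)" and sumP: "\<forall>f\<in>?G. \<forall>g\<in>?G. (\<Sum>w\<in>bit_words m. P w f g) = idop f g"
    using loccp_sep_povm[OF P(1) fin] by blast+
  define z where "z = replicate m (0::nat)"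
  have z: "z \<in> bit_words m" unfolding z_def bit_words_def by auto
  have Pz: "P z f h = prod_vec m \<phi> f * cnj (prod_vec m \<phi> h)" if "f \<in> ?G" "h \<in> ?G" for f h
    using P(2) z that unfolding z_def
    by (simp cong: ptensor_cong add: proj_kraus_def ptensor_outer)
  define g where "g w = (if w = z then c else x)" for w
  define M where "M c' f h = (\<Sum>w\<in>{w\<in>bit_words m. g w = c'}. P w f h)" for c' f h
  have Wc: "{w\<in>bit_words m. g w = c} = {z}" and Wx: "{w\<in>bit_words m. g w = x} = bit_words m - {z}"
    using z C(3) unfolding g_def by auto
  show ?thesis
  proof (intro exI conjI ballI allI impI)
    show "locc_povm m S C M"
      unfolding locc_povm_def M_def using P(1) C by (intro exI[of _ "bit_words m"] exI[of _ P] exI[of _ g]) (auto simp: g_def)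
    fix f h assume fh: "f \<in> ?G" "h \<in> ?G"
    show "M c f h = prod_vec m \<phi> f * cnj (prod_vec m \<phi> h)"
      unfolding M_def Wc using Pz[OF fh] by simp
    show "M x f h = idop f h - prod_vec m \<phi> f * cnj (prod_vec m \<phi> h)"
      unfolding M_def Wx sum_diff1[OF finW] using z sumP Pz[OF fh] fh by simp
  next
    fix c' assume "c' \<noteq> x \<and> c' \<noteq> c"
    then have "{w\<in>bit_words m. g w = c'} = {}" unfolding g_def by auto
    then show "M c' = (\<lambda>_ _. 0)" unfolding M_def by (simp only: sum.empty)
  qed
qed

lemma prod_vec_normalize:
  assumes fin: "\<And>k. k < m \<Longrightarrow> finite (S k)" and nz: "f \<in> gidx m S" "prod_vec m \<psi> f \<noteq> 0"
  shows "\<exists>r \<phi>. 0 < r \<and> (\<forall>k<m. (\<Sum>i\<in>S k. cnj (\<phi> k i) * \<phi> k i) = 1) \<and>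
    prod_vec m \<phi> = (\<lambda>f. complex_of_real r * prod_vec m \<psi> f)"
proof (intro exI conjI allI impI)
  define n where "n k = (\<Sum>i\<in>S k. (Re (\<psi> k i))\<^sup>2 + (Im (\<psi> k i))\<^sup>2)" for k
  have n: "n k > 0" if k: "k < m" for k
  proof -
    have "\<psi> k (f k) \<noteq> 0" using nz(2) k unfolding prod_vec_def by auto
    then have "0 < (Re (\<psi> k (f k)))\<^sup>2 + (Im (\<psi> k (f k)))\<^sup>2" by (simp add: complex_neq_0)
    also have "\<dots> \<le> n k" unfolding n_def by (rule member_le_sum) (use fin k gidx_memD[OF nz(1) k] in auto)
    finally show ?thesis .
  qed
  define \<phi> where "\<phi> k i = complex_of_real (1 / sqrt (n k)) * \<psi> k i" for k i
  show "(\<Sum>i\<in>S k. cnj (\<phi> k i) * \<phi> k i) = 1" if k: "k < m" for k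
  proof -
    have "(\<Sum>i\<in>S k. cnj (\<psi> k i) * \<psi> k i) = complex_of_real (n k)"
      unfolding n_def by (simp add: complex_eq_iff Re_sum Im_sum power2_eq_square)
    moreover have "complex_of_real (1 / sqrt (n k)) * complex_of_real (1 / sqrt (n k)) = complex_of_real (1 / n k)"
      using n[OF k] by (simp flip: of_real_mult)
    then have "(\<Sum>i\<in>S k. cnj (\<phi> k i) * \<phi> k i) = complex_of_real (1 / n k) * (\<Sum>i\<in>S k. cnj (\<psi> k i) * \<psi> k i)"
      unfolding \<phi>_def sum_distrib_left by (intro sum.cong refl) (simp add: mult_ac)
    ultimately show ?thesis using n[OF k] by simp
  qed
  show "0 < (\<Prod>k<m. 1 / sqrt (n k))" using n by (auto intro: prod_pos)
  show "prod_vec m \<phi> = (\<lambda>f. complex_of_real (\<Prod>k<m. 1 / sqrt (n k)) * prod_vec m \<psi> f)"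
    unfolding prod_vec_def \<phi>_def by (simp only: prod.distrib of_real_prod)
qed

lemma psucc_product_test:
  assumes fin: "\<And>k. k < m \<Longrightarrow> finite (S k)"
    and C: "finite C" "x \<in> C" "c \<in> C" "c \<noteq> x"
    and \<rho>x: "trace_on (gidx m S) (\<rho> x) = 1"
    and M: "\<forall>f\<in>gidx m S. \<forall>h\<in>gidx m S. M c f h = \<Phi> f * cnj (\<Phi> h) \<and> M x f h = idop f h - \<Phi> f * cnj (\<Phi> h)"
      "\<forall>c'. c' \<noteq> x \<and> c' \<noteq> c \<longrightarrow> M c' = (\<lambda>_ _. 0)"
  shows "psucc (gidx m S) C \<eta> \<rho> M
    = \<eta> x - Re (qform (gidx m S) (\<lambda>f g. complex_of_real (\<eta> x) * \<rho> x f g - complex_of_real (\<eta> c) * \<rho> c f g) \<Phi>)"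
proof -
  let ?G = "gidx m S"
  let ?T = "\<lambda>c'. \<eta> c' * Re (trace_on ?G (mmult ?G (\<rho> c') (M c')))"
  have "psucc ?G C \<eta> \<rho> M = ?T x + ?T c"
    unfolding psucc_def using C
    by (subst sum.mono_neutral_right[of C "{x, c}"]) (auto simp: M(2) trace_on_def mmult_def)
  also have "trace_on ?G (mmult ?G (\<rho> c) (M c)) = qform ?G (\<rho> c) \<Phi>"
    unfolding trace_mmult_outer[symmetric] by (rule trace_mmult_cong) (simp_all add: M(1))
  also have "trace_on ?G (mmult ?G (\<rho> x) (M x)) = 1 - qform ?G (\<rho> x) \<Phi>"
  proof -
    have "trace_on ?G (mmult ?G (\<rho> x) (M x)) = trace_on ?G (mmult ?G (\<rho> x) (\<lambda>f h. idop f h - \<Phi> f * cnj (\<Phi> h)))"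
      by (rule trace_mmult_cong) (simp_all add: M(1))
    then show ?thesis
      using \<rho>x trace_mmult_idop[OF finite_gidx[OF fin]] by (simp add: trace_mmult_diff_right trace_mmult_outer)
  qed
  finally show ?thesis unfolding qform_diff qform_scale by (simp add: algebra_simps)
qed

lemma psucc_locc_gt_if_not_block_positive:
  assumes fin: "\<And>k. k < m \<Longrightarrow> finite (S k)"
    and C: "finite C" "x \<in> C" "c \<in> C" "c \<noteq> x"
    and \<rho>x: "trace_on (gidx m S) (\<rho> x) = 1"
    and neg: "Re (qform (gidx m S) (\<lambda>f g. complex_of_real (\<eta> x) * \<rho> x f g - complex_of_real (\<eta> c) * \<rho> c f g)
                (prod_vec m \<psi>)) < 0"
  shows "\<exists>M. povm_on (gidx m S) C M \<and> locc_povm m S C M \<and> \<eta> x < psucc (gidx m S) C \<eta> \<rho> M"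
proof -
  let ?G = "gidx m S"
  define E where "E f g = complex_of_real (\<eta> x) * \<rho> x f g - complex_of_real (\<eta> c) * \<rho> c f g" for f g
  have "\<exists>f\<in>?G. prod_vec m \<psi> f \<noteq> 0"
  proof (rule ccontr)
    assume "\<not> (\<exists>f\<in>?G. prod_vec m \<psi> f \<noteq> 0)"
    then have "qform ?G E (prod_vec m \<psi>) = 0" unfolding qform_def by simp
    with neg show False unfolding E_def by simp
  qed
  then obtain f where f: "f \<in> ?G" "prod_vec m \<psi> f \<noteq> 0" by blast
  obtain r \<phi> where r: "0 < r" and nrm: "\<forall>k<m. (\<Sum>i\<in>S k. cnj (\<phi> k i) * \<phi> k i) = 1"
    and \<phi>: "prod_vec m \<phi> = (\<lambda>f. complex_of_real r * prod_vec m \<psi> f)"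
    using prod_vec_normalize[of m S, OF fin f] by blast
  let ?\<Phi> = "prod_vec m \<phi>"
  have negE: "Re (qform ?G E ?\<Phi>) < 0"
    unfolding \<phi> qform_scale_vector using neg r unfolding E_def by (simp add: mult_pos_neg)
  obtain M where M: "locc_povm m S C M"
    "\<forall>f\<in>?G. \<forall>h\<in>?G. M c f h = ?\<Phi> f * cnj (?\<Phi> h) \<and> M x f h = idop f h - ?\<Phi> f * cnj (?\<Phi> h)"
    "\<forall>c'. c' \<noteq> x \<and> c' \<noteq> c \<longrightarrow> M c' = (\<lambda>_ _. 0)"
    using locc_povm_product_test[of m S, OF fin nrm[rule_format] C(2-4)] by blast
  have "psucc ?G C \<eta> \<rho> M = \<eta> x - Re (qform ?G E ?\<Phi>)"
    unfolding E_def by (rule psucc_product_test[where \<rho>=\<rho> and M=M and \<Phi>="?\<Phi>", OF fin C \<rho>x M(2,3)])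
  then show ?thesis using M(1) locc_povm_imp_sep_povm[OF M(1) C(1) fin] negE by auto
qed

section \<open>Optimality of guessing the most likely state\<close>

lemma p_L_p_SEP_eq_if_sep_dual:
  assumes fin: "\<And>k. k < m \<Longrightarrow> finite (S k)" and m: "0 < m" and C: "finite C" "x \<in> C"
    and \<rho>x: "trace_on (gidx m S) (\<rho> x) = 1"
    and E: "\<forall>c\<in>C. sep_dual m S (\<lambda>f g. complex_of_real (\<eta> x) * \<rho> x f g - complex_of_real (\<eta> c) * \<rho> c f g)"
  shows "p_L m S C \<eta> \<rho> = \<eta> x" "p_SEP m S C \<eta> \<rho> = \<eta> x"
proof -
  let ?G = "gidx m S"
  let ?LS = "{psucc ?G C \<eta> \<rho> M | M. povm_on ?G C M \<and> locc_povm m S C M}"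
  let ?SS = "{psucc ?G C \<eta> \<rho> M | M. povm_on ?G C M \<and> sep_povm m S C M}"
  have locc: "povm_on ?G C M \<and> sep_povm m S C M" if "locc_povm m S C M" for M
    by (rule locc_povm_imp_sep_povm[OF that C(1) fin])
  have guess: "locc_povm m S C (guess_povm x)" by (rule locc_povm_guess[OF C(2)])
  have "psucc ?G C \<eta> \<rho> (guess_povm x) = \<eta> x" by (rule psucc_guess_povm) (use C \<rho>x fin in auto)
  then have in_LS: "\<eta> x \<in> ?LS" and in_SS: "\<eta> x \<in> ?SS"
    unfolding mem_Collect_eq by (intro exI[of _ "guess_povm x"], use guess locc[OF guess] in simp)+
  have ub: "psucc ?G C \<eta> \<rho> M \<le> \<eta> x" if "povm_on ?G C M" "sep_povm m S C M" for M
    by (rule psucc_le_if_sep_dual[of m S, OF fin m \<rho>x E that])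
  show "p_L m S C \<eta> \<rho> = \<eta> x" unfolding p_L_def
    by (rule cSup_eq_maximum[OF in_LS]) (use ub locc in blast)
  show "p_SEP m S C \<eta> \<rho> = \<eta> x" unfolding p_SEP_def
    by (rule cSup_eq_maximum[OF in_SS]) (use ub in blast)
qed

lemma sep_dual_if_p_L_eq:
  assumes fin: "\<And>k. k < m \<Longrightarrow> finite (S k)" and m: "0 < m" and C: "finite C" "x \<in> C"
    and \<eta>: "\<forall>c\<in>C. 0 \<le> \<eta> c"
    and \<rho>: "\<forall>c\<in>C. psd_on (gidx m S) (\<rho> c) \<and> trace_on (gidx m S) (\<rho> c) = 1"
    and pL: "p_L m S C \<eta> \<rho> = \<eta> x"
  shows "\<forall>c\<in>C. sep_dual m S (\<lambda>f g. complex_of_real (\<eta> x) * \<rho> x f g - complex_of_real (\<eta> c) * \<rho> c f g)"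
proof (rule ballI, rule ccontr)
  let ?G = "gidx m S"
  let ?E = "\<lambda>c f g. complex_of_real (\<eta> x) * \<rho> x f g - complex_of_real (\<eta> c) * \<rho> c f g"
  let ?LS = "{psucc ?G C \<eta> \<rho> M | M. povm_on ?G C M \<and> locc_povm m S C M}"
  fix c assume c: "c \<in> C" and not_sd: "\<not> sep_dual m S (?E c)"
  have "hermitian_on ?G (?E c)"
    by (rule hermitian_on_weighted_diff[OF finite_gidx[OF fin]]) (use \<rho> c C in auto)
  then have "\<not> (\<forall>\<psi>. 0 \<le> Re (qform ?G (?E c) (prod_vec m \<psi>)))"
    using sep_dual_iff_prod_vec[of m S, OF fin m] not_sd by blast
  then obtain \<psi> where neg: "Re (qform ?G (?E c) (prod_vec m \<psi>)) < 0" by (auto simp: not_le)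
  have "c \<noteq> x" using neg by (auto simp: qform_def)
  then obtain M where M: "povm_on ?G C M" "locc_povm m S C M" "\<eta> x < psucc ?G C \<eta> \<rho> M"
    using psucc_locc_gt_if_not_block_positive[of m S, OF fin C c _ _ neg] \<rho> C(2) by blast
  have bdd: "bdd_above ?LS"
    by (rule bdd_aboveI[of _ "\<Sum>c\<in>C. \<eta> c"]) (use psucc_le_sum_prob[of m S, OF _ fin \<eta> \<rho>] in blast)
  have "psucc ?G C \<eta> \<rho> M \<le> p_L m S C \<eta> \<rho>"
    unfolding p_L_def by (rule cSup_upper[OF _ bdd]) (use M in blast)
  then show False using M(3) pL by simp
qed

lemma p_L_eq_iff_sep_dual:
  assumes fin: "\<And>k. k < m \<Longrightarrow> finite (S k)" and m: "0 < m" and C: "finite C" "x \<in> C"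
    and \<eta>: "\<forall>c\<in>C. 0 \<le> \<eta> c"
    and \<rho>: "\<forall>c\<in>C. psd_on (gidx m S) (\<rho> c) \<and> trace_on (gidx m S) (\<rho> c) = 1"
  shows "p_L m S C \<eta> \<rho> = \<eta> x
    \<longleftrightarrow> (\<forall>c\<in>C. sep_dual m S (\<lambda>f g. complex_of_real (\<eta> x) * \<rho> x f g - complex_of_real (\<eta> c) * \<rho> c f g))"
  using sep_dual_if_p_L_eq[of m S, OF fin m C \<eta> \<rho>] p_L_p_SEP_eq_if_sep_dual(1)[of m S, OF fin m C] \<rho> C(2)
  by blast

section \<open>Sequence ensembles\<close>

abbreviation copy_gidx :: "nat \<Rightarrow> (nat \<Rightarrow> nat) \<Rightarrow> (nat \<Rightarrow> nat) set" where
  "copy_gidx m d \<equiv> gidx m (\<lambda>k. {..<d k})"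

text \<open>Regroups basis indices \<open>l \<mapsto> (k \<mapsto> i)\<close> of the copies into the basis index
  \<open>k \<mapsto> (l \<mapsto> i)\<close> of the sequence system.\<close>
definition transpose_idx :: "nat \<Rightarrow> nat \<Rightarrow> (nat \<Rightarrow> nat \<Rightarrow> nat) \<Rightarrow> nat \<Rightarrow> nat \<Rightarrow> nat" where
  "transpose_idx m L X = restrict (\<lambda>k. restrict (\<lambda>l. X l k) {1..L}) {..<m}"

lemma finite_copy_gidx: "finite (copy_gidx m d)"
  by (rule finite_gidx) auto

lemma restrict_transpose_idx:
  assumes "X \<in> PiE {1..L} (\<lambda>_. copy_gidx m d)" "l \<in> {1..L}"
  shows "restrict (\<lambda>k. transpose_idx m L X k l) {..<m} = X l"
proof -
  have "X l \<in> copy_gidx m d" using assms by auto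
  then show ?thesis
    using assms(2) unfolding transpose_idx_def gidx_def by (auto simp: PiE_def extensional_def fun_eq_iff)
qed

lemma bij_betw_transpose_idx:
  "bij_betw (transpose_idx m L) (PiE {1..L} (\<lambda>_. copy_gidx m d)) (gidx m (seqS L d))"
proof -
  let ?inv = "\<lambda>F. restrict (\<lambda>l. restrict (\<lambda>k. F k l) {..<m}) {1..L}"
  show ?thesis
  proof (rule bij_betw_byWitness[where f'="?inv"])
    show "\<forall>X\<in>PiE {1..L} (\<lambda>_. copy_gidx m d). ?inv (transpose_idx m L X) = X"
    proof (intro ballI, rule ext)
      fix X l assume X: "X \<in> PiE {1..L} (\<lambda>_. copy_gidx m d)"
      show "?inv (transpose_idx m L X) l = X l"
        using restrict_transpose_idx[OF X] X by (cases "l \<in> {1..L}") (auto simp: PiE_def extensional_def)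
    qed
    show "\<forall>F\<in>gidx m (seqS L d). transpose_idx m L (?inv F) = F"
    proof (intro ballI, rule ext)
      fix F k assume F: "F \<in> gidx m (seqS L d)"
      show "transpose_idx m L (?inv F) k = F k"
        using F gidx_memD[OF F, of k] unfolding transpose_idx_def gidx_def seqS_def
        by (cases "k < m") (auto simp: PiE_def extensional_def fun_eq_iff)
    qed
    show "transpose_idx m L ` PiE {1..L} (\<lambda>_. copy_gidx m d) \<subseteq> gidx m (seqS L d)"
      unfolding transpose_idx_def gidx_def seqS_def by (auto simp: PiE_iff)
    show "?inv ` gidx m (seqS L d) \<subseteq> PiE {1..L} (\<lambda>_. copy_gidx m d)"
      unfolding gidx_def seqS_def by (auto simp: PiE_iff)
  qed
qed

lemma sum_seq_gidx:
  "(\<Sum>F\<in>gidx m (seqS L d). h F) = (\<Sum>X\<in>PiE {1..L} (\<lambda>_. copy_gidx m d). h (transpose_idx m L X))"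
  using sum.reindex_bij_betw[OF bij_betw_transpose_idx, of h] by simp

lemma seq_state_transpose_idx:
  assumes "X \<in> PiE {1..L} (\<lambda>_. copy_gidx m d)" "Y \<in> PiE {1..L} (\<lambda>_. copy_gidx m d)"
  shows "seq_state m L \<rho> c (transpose_idx m L X) (transpose_idx m L Y) = (\<Prod>l\<in>{1..L}. \<rho> l (c l) (X l) (Y l))"
  unfolding seq_state_def using restrict_transpose_idx[OF assms(1)] restrict_transpose_idx[OF assms(2)] by simp

lemma prod_vec_transpose_idx:
  "prod_vec m (\<lambda>k F. \<Prod>l\<in>{1..L}. \<phi> l k (F l)) (transpose_idx m L X) = (\<Prod>l\<in>{1..L}. prod_vec m (\<phi> l) (X l))"
  unfolding prod_vec_def transpose_idx_def by (simp add: prod.swap[of _ "{..<m}"])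

lemma qform_seq_state:
  "qform (gidx m (seqS L d)) (seq_state m L \<rho> c) (prod_vec m (\<lambda>k F. \<Prod>l\<in>{1..L}. \<phi> l k (F l)))
   = (\<Prod>l\<in>{1..L}. qform (copy_gidx m d) (\<rho> l (c l)) (prod_vec m (\<phi> l)))"
proof -
  let ?P = "PiE {1..L} (\<lambda>_. copy_gidx m d)"
  let ?h = "\<lambda>l a b. cnj (prod_vec m (\<phi> l) a) * \<rho> l (c l) a b * prod_vec m (\<phi> l) b"
  have "qform (gidx m (seqS L d)) (seq_state m L \<rho> c) (prod_vec m (\<lambda>k F. \<Prod>l\<in>{1..L}. \<phi> l k (F l)))
      = (\<Sum>X\<in>?P. \<Sum>Y\<in>?P. \<Prod>l\<in>{1..L}. ?h l (X l) (Y l))"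
    unfolding qform_def sum_seq_gidx prod_vec_transpose_idx
    by (intro sum.cong refl) (simp add: seq_state_transpose_idx cnj_prod prod.distrib)
  also have "\<dots> = (\<Sum>X\<in>?P. \<Prod>l\<in>{1..L}. \<Sum>b\<in>copy_gidx m d. ?h l (X l) b)"
    by (intro sum.cong refl prod_sum_PiE[symmetric]) (auto simp: finite_copy_gidx)
  also have "\<dots> = (\<Prod>l\<in>{1..L}. \<Sum>a\<in>copy_gidx m d. \<Sum>b\<in>copy_gidx m d. ?h l a b)"
    by (rule prod_sum_PiE[symmetric]) (auto simp: finite_copy_gidx)
  finally show ?thesis unfolding qform_def .
qed

lemma trace_seq_state:
  assumes "\<forall>l\<in>{1..L}. trace_on (copy_gidx m d) (\<rho> l (c l)) = 1"
  shows "trace_on (gidx m (seqS L d)) (seq_state m L \<rho> c) = 1"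
proof -
  have "trace_on (gidx m (seqS L d)) (seq_state m L \<rho> c)
      = (\<Sum>X\<in>PiE {1..L} (\<lambda>_. copy_gidx m d). \<Prod>l\<in>{1..L}. \<rho> l (c l) (X l) (X l))"
    unfolding trace_on_def sum_seq_gidx by (intro sum.cong refl) (simp add: seq_state_transpose_idx)
  also have "\<dots> = (\<Prod>l\<in>{1..L}. trace_on (copy_gidx m d) (\<rho> l (c l)))"
    unfolding trace_on_def by (rule prod_sum_PiE[symmetric]) (auto simp: finite_copy_gidx)
  finally show ?thesis using assms by simp
qed

text \<open>The Gram vectors of the sequence state are the products of Gram vectors of the factors.\<close>
lemma psd_on_seq_state:
  assumes "\<forall>l\<in>{1..L}. psd_on (copy_gidx m d) (\<rho> l (c l))"
  shows "psd_on (gidx m (seqS L d)) (seq_state m L \<rho> c)"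
proof -
  let ?r = "\<lambda>F l. restrict (\<lambda>k. F k l) {..<m}"
  have "\<forall>l\<in>{1..L}. finite (copy_gidx m d) \<and> psd_on (copy_gidx m d) (\<rho> l (c l))"
    using assms finite_copy_gidx by blast
  from psd_on_gram_family[OF this]
  obtain N :: "nat \<Rightarrow> nat" and v where Nv: "\<forall>l\<in>{1..L}. \<forall>i\<in>copy_gidx m d. \<forall>j\<in>copy_gidx m d.
      \<rho> l (c l) i j = (\<Sum>t<N l. v l t i * cnj (v l t j))"
    by blast
  define W where "W \<tau> F = (\<Prod>l\<in>{1..L}. v l (\<tau> l) (?r F l))" for \<tau> F
  show ?thesis
  proof (rule psd_on_sum_outer[where T="PiE {1..L} (\<lambda>l. {..<N l})" and v=W], intro ballI)
    fix F H assume FH: "F \<in> gidx m (seqS L d)" "H \<in> gidx m (seqS L d)"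
    then have r: "?r F l \<in> copy_gidx m d" "?r H l \<in> copy_gidx m d" if "l \<in> {1..L}" for l
      using that unfolding gidx_def seqS_def by (auto simp: PiE_iff)
    have "seq_state m L \<rho> c F H
        = (\<Prod>l\<in>{1..L}. \<Sum>t<N l. v l t (?r F l) * cnj (v l t (?r H l)))"
      unfolding seq_state_def using Nv r by (intro prod.cong refl) blast
    also have "\<dots> = (\<Sum>\<tau>\<in>PiE {1..L} (\<lambda>l. {..<N l}).
        \<Prod>l\<in>{1..L}. v l (\<tau> l) (?r F l) * cnj (v l (\<tau> l) (?r H l)))"
      by (rule prod_sum_PiE) auto
    also have "\<dots> = (\<Sum>\<tau>\<in>PiE {1..L} (\<lambda>l. {..<N l}). W \<tau> F * cnj (W \<tau> H))"
      unfolding W_def by (simp add: prod.distrib cnj_prod)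
    finally show "seq_state m L \<rho> c F H = (\<Sum>\<tau>\<in>PiE {1..L} (\<lambda>l. {..<N l}). W \<tau> F * cnj (W \<tau> H))" .
  qed
qed

text \<open>A basis vector at a positive diagonal entry of the state is a product vector.\<close>
lemma density_qform_prod_vec_pos:
  assumes "psd_on (gidx m S) \<rho>" "trace_on (gidx m S) \<rho> = 1" "\<And>k. k < m \<Longrightarrow> finite (S k)"
  shows "\<exists>\<phi>. 0 < Re (qform (gidx m S) \<rho> (prod_vec m \<phi>))"
proof -
  let ?G = "gidx m S"
  have "\<exists>b\<in>?G. 0 < Re (\<rho> b b)"
  proof (rule ccontr)
    assume "\<not> (\<exists>b\<in>?G. 0 < Re (\<rho> b b))"
    then have "Re (trace_on ?G \<rho>) \<le> 0" unfolding trace_on_def Re_sum by (intro sum_nonpos) (auto simp: not_less)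
    then show False using assms(2) by simp
  qed
  then obtain b where b: "b \<in> ?G" "0 < Re (\<rho> b b)" by blast
  let ?\<phi> = "\<lambda>k i. if i = b k then 1 else 0 :: complex"
  have "prod_vec m ?\<phi> f = 0" if "f \<in> ?G" "f \<noteq> b" for f
    using gidx_eqI[OF that(1) b(1)] that(2) unfolding prod_vec_def by (auto intro: prod_zero)
  moreover have "prod_vec m ?\<phi> b = 1" unfolding prod_vec_def by simp
  ultimately have "qform ?G \<rho> (prod_vec m ?\<phi>) = \<rho> b b"
    using qform_singleton[OF finite_gidx[OF assms(3)] b(1), of "prod_vec m ?\<phi>" \<rho>] by simp
  then show ?thesis using b(2) by metis
qed

lemma finite_seqS: "finite (seqS L d k)"
  unfolding seqS_def by (auto intro!: finite_PiE)

lemma finite_seq_idx: "finite (seq_idx L n)"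
  unfolding seq_idx_def by (auto intro!: finite_PiE)

lemma ensemble_states:
  assumes "ensemble m d n \<eta> \<rho>" "i \<in> {1..n}"
  shows "0 < \<eta> i" "psd_on (copy_gidx m d) (\<rho> i)" "trace_on (copy_gidx m d) (\<rho> i) = 1"
  using assms unfolding ensemble_def density_on_def by auto

lemma qform_seq_diff_update:
  assumes l: "l \<in> {1..L}"
  shows "qform (gidx m (seqS L d))
      (\<lambda>F G. complex_of_real (seq_prob L \<eta> x) * seq_state m L \<rho> x F G
        - complex_of_real (seq_prob L \<eta> (x(l := c))) * seq_state m L \<rho> (x(l := c)) F G)
      (prod_vec m (\<lambda>k F. \<Prod>l'\<in>{1..L}. (\<phi>(l := \<psi>)) l' k (F l')))
    = (\<Prod>l'\<in>{1..L} - {l}. complex_of_real (\<eta> l' (x l')) * qform (copy_gidx m d) (\<rho> l' (x l')) (prod_vec m (\<phi> l')))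
      * qform (copy_gidx m d) (\<lambda>f g. complex_of_real (\<eta> l (x l)) * \<rho> l (x l) f g - complex_of_real (\<eta> l c) * \<rho> l c f g)
          (prod_vec m \<psi>)"
proof -
  let ?\<Psi> = "prod_vec m (\<lambda>k F. \<Prod>l'\<in>{1..L}. (\<phi>(l := \<psi>)) l' k (F l'))"
  let ?Q = "\<lambda>cc l'. complex_of_real (\<eta> l' (cc l')) * qform (copy_gidx m d) (\<rho> l' (cc l')) (prod_vec m ((\<phi>(l := \<psi>)) l'))"
  have weighted: "complex_of_real (seq_prob L \<eta> cc) * qform (gidx m (seqS L d)) (seq_state m L \<rho> cc) ?\<Psi>
      = ?Q cc l * (\<Prod>l'\<in>{1..L} - {l}. ?Q cc l')" for cc
    unfolding qform_seq_state seq_prob_def of_real_prod prod.distrib[symmetric]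
    by (rule prod.remove) (use l in auto)
  let ?R = "\<Prod>l'\<in>{1..L} - {l}. complex_of_real (\<eta> l' (x l')) * qform (copy_gidx m d) (\<rho> l' (x l')) (prod_vec m (\<phi> l'))"
  have "(\<Prod>l'\<in>{1..L} - {l}. ?Q x l') = ?R" "(\<Prod>l'\<in>{1..L} - {l}. ?Q (x(l := c)) l') = ?R"
    by (intro prod.cong refl; simp)+
  then show ?thesis
    unfolding qform_diff qform_scale weighted by (simp add: right_diff_distrib)
qed

lemma sep_dual_component_if_sep_dual_seq:
  assumes m: "0 < m" and ens: "\<forall>l\<in>{1..L}. ensemble m d (n l) (\<eta> l) (\<rho> l)" and x: "x \<in> seq_idx L n"
    and sd: "\<forall>c\<in>seq_idx L n. sep_dual m (seqS L d) (\<lambda>F G. complex_of_real (seq_prob L \<eta> x) * seq_state m L \<rho> x F G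
                        - complex_of_real (seq_prob L \<eta> c) * seq_state m L \<rho> c F G)"
    and l: "l \<in> {1..L}" and c: "c \<in> {1..n l}"
  shows "sep_dual m (\<lambda>k. {..<d k}) (\<lambda>f g. complex_of_real (\<eta> l (x l)) * \<rho> l (x l) f g - complex_of_real (\<eta> l c) * \<rho> l c f g)"
proof -
  let ?G = "copy_gidx m d"
  let ?Gs = "gidx m (seqS L d)"
  let ?E = "\<lambda>f g. complex_of_real (\<eta> l (x l)) * \<rho> l (x l) f g - complex_of_real (\<eta> l c) * \<rho> l c f g"
  let ?Es = "\<lambda>F G. complex_of_real (seq_prob L \<eta> x) * seq_state m L \<rho> x F G
                  - complex_of_real (seq_prob L \<eta> (x(l := c))) * seq_state m L \<rho> (x(l := c)) F G"
  have xl: "x l' \<in> {1..n l'}" if "l' \<in> {1..L}" for l' using x that unfolding seq_idx_def by auto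
  have c': "x(l := c) \<in> seq_idx L n" using x l c unfolding seq_idx_def by (auto simp: PiE_iff extensional_def)
  note state = ensemble_states[OF ens[rule_format]]
  have "\<forall>l'\<in>{1..L}. \<exists>\<phi>. 0 < Re (qform ?G (\<rho> l' (x l')) (prod_vec m \<phi>))"
    using density_qform_prod_vec_pos state(2,3) xl by blast
  then obtain \<phi> where \<phi>: "\<forall>l'\<in>{1..L}. 0 < Re (qform ?G (\<rho> l' (x l')) (prod_vec m (\<phi> l')))"
    by (rule bchoice[elim_format]) blast
  define r where "r = (\<Prod>l'\<in>{1..L} - {l}. \<eta> l' (x l') * Re (qform ?G (\<rho> l' (x l')) (prod_vec m (\<phi> l'))))"
  have "0 < r" unfolding r_def using \<phi> state(1) xl by (auto intro!: prod_pos)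
  have r_eq: "(\<Prod>l'\<in>{1..L} - {l}. complex_of_real (\<eta> l' (x l')) * qform ?G (\<rho> l' (x l')) (prod_vec m (\<phi> l')))
      = complex_of_real r"
    unfolding r_def of_real_prod of_real_mult
    using psd_on_qform_real[OF state(2)[OF _ xl]] by (intro prod.cong refl) auto
  have "hermitian_on ?G ?E"
    by (rule hermitian_on_weighted_diff[OF finite_copy_gidx]) (use state xl l c in auto)
  moreover have "0 \<le> Re (qform ?G ?E (prod_vec m \<psi>))" for \<psi>
  proof -
    have "hermitian_on ?Gs ?Es" using sd c' unfolding sep_dual_def by blast
    then have "0 \<le> Re (qform ?Gs ?Es (prod_vec m (\<lambda>k F. \<Prod>l'\<in>{1..L}. (\<phi>(l := \<psi>)) l' k (F l'))))"
      using sep_dual_iff_prod_vec[of m "seqS L d", OF finite_seqS m] sd c' by blast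
    then show ?thesis using \<open>0 < r\<close> unfolding qform_seq_diff_update[OF l] r_eq by (simp add: zero_le_mult_iff)
  qed
  ultimately show ?thesis using sep_dual_iff_prod_vec[of m "\<lambda>k. {..<d k}"] m by simp
qed

lemma p_L_component_eq_if_sep_dual_seq:
  assumes m: "0 < m" and ens: "\<forall>l\<in>{1..L}. ensemble m d (n l) (\<eta> l) (\<rho> l)" and x: "x \<in> seq_idx L n"
    and sd: "\<forall>c\<in>seq_idx L n. sep_dual m (seqS L d) (\<lambda>F G. complex_of_real (seq_prob L \<eta> x) * seq_state m L \<rho> x F G
                        - complex_of_real (seq_prob L \<eta> c) * seq_state m L \<rho> c F G)"
    and l: "l \<in> {1..L}"
  shows "p_L m (\<lambda>k. {..<d k}) {1..n l} (\<eta> l) (\<rho> l) = \<eta> l (x l)"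
proof -
  have xl: "x l \<in> {1..n l}" using x l unfolding seq_idx_def by auto
  show ?thesis
    by (rule p_L_p_SEP_eq_if_sep_dual(1)[of m "\<lambda>k. {..<d k}"])
       (use m xl sep_dual_component_if_sep_dual_seq[OF m ens x sd l] ensemble_states[OF ens[rule_format, OF l] xl]
        in auto)
qed

lemma seq_ensemble_states:
  assumes ens: "\<forall>l\<in>{1..L}. ensemble m d (n l) (\<eta> l) (\<rho> l)" and c: "c \<in> seq_idx L n"
  shows "0 \<le> seq_prob L \<eta> c" "psd_on (gidx m (seqS L d)) (seq_state m L \<rho> c)"
    "trace_on (gidx m (seqS L d)) (seq_state m L \<rho> c) = 1"
proof -
  have cl: "c l \<in> {1..n l}" if "l \<in> {1..L}" for l using c that unfolding seq_idx_def by auto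
  note state = ensemble_states[OF ens[rule_format] cl]
  show "0 \<le> seq_prob L \<eta> c" unfolding seq_prob_def by (rule prod_nonneg) (use state(1) in force)
  show "psd_on (gidx m (seqS L d)) (seq_state m L \<rho> c)" by (rule psd_on_seq_state) (use state(2) in blast)
  show "trace_on (gidx m (seqS L d)) (seq_state m L \<rho> c) = 1" by (rule trace_seq_state) (use state(3) in blast)
qed

theorem theorem2:
  fixes m L :: nat and d n :: "nat \<Rightarrow> nat"
    and \<eta> :: "nat \<Rightarrow> nat \<Rightarrow> real" and \<rho> :: "nat \<Rightarrow> nat \<Rightarrow> (nat \<Rightarrow> nat) op"
    and x :: "nat \<Rightarrow> nat"
  assumes "m \<ge> 2" and "\<forall>k<m. d k \<ge> 2" and "L \<ge> 1"
    and "\<forall>l\<in>{1..L}. ensemble m d (n l) (\<eta> l) (\<rho> l)"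
    and "x \<in> seq_idx L n"
  shows "(p_L m (seqS L d) (seq_idx L n) (seq_prob L \<eta>) (seq_state m L \<rho>) = seq_prob L \<eta> x
          \<longleftrightarrow> (\<forall>c\<in>seq_idx L n. sep_dual m (seqS L d)
                 (\<lambda>F G. complex_of_real (seq_prob L \<eta> x) * seq_state m L \<rho> x F G
                        - complex_of_real (seq_prob L \<eta> c) * seq_state m L \<rho> c F G)))
      \<and> (p_L m (seqS L d) (seq_idx L n) (seq_prob L \<eta>) (seq_state m L \<rho>) = seq_prob L \<eta> x \<longrightarrow>
           p_L m (seqS L d) (seq_idx L n) (seq_prob L \<eta>) (seq_state m L \<rho>)
             = p_SEP m (seqS L d) (seq_idx L n) (seq_prob L \<eta>) (seq_state m L \<rho>)
         \<and> p_L m (seqS L d) (seq_idx L n) (seq_prob L \<eta>) (seq_state m L \<rho>)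
             = (\<Prod>l\<in>{1..L}. p_L m (\<lambda>k. {..<d k}) {1..n l} (\<eta> l) (\<rho> l)))"
proof -
  let ?pL = "p_L m (seqS L d) (seq_idx L n) (seq_prob L \<eta>) (seq_state m L \<rho>)"
  let ?SD = "\<forall>c\<in>seq_idx L n. sep_dual m (seqS L d) (\<lambda>F G. complex_of_real (seq_prob L \<eta> x) * seq_state m L \<rho> x F G
                        - complex_of_real (seq_prob L \<eta> c) * seq_state m L \<rho> c F G)"
  have m: "0 < m" using assms(1) by simp
  note states = seq_ensemble_states[OF assms(4)]
  have iff: "?pL = seq_prob L \<eta> x \<longleftrightarrow> ?SD"
    by (rule p_L_eq_iff_sep_dual) (use m finite_seqS finite_seq_idx assms(5) states in auto)
  have sep: "p_SEP m (seqS L d) (seq_idx L n) (seq_prob L \<eta>) (seq_state m L \<rho>) = seq_prob L \<eta> x" if ?SD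
    by (rule p_L_p_SEP_eq_if_sep_dual(2)) (use m finite_seqS finite_seq_idx assms(5) states that in auto)
  have prod: "(\<Prod>l\<in>{1..L}. p_L m (\<lambda>k. {..<d k}) {1..n l} (\<eta> l) (\<rho> l)) = seq_prob L \<eta> x" if ?SD
    unfolding seq_prob_def
    by (rule prod.cong[OF refl]) (rule p_L_component_eq_if_sep_dual_seq[OF m assms(4,5) that])
  show ?thesis
  proof (intro conjI impI)
    show "?pL = seq_prob L \<eta> x \<longleftrightarrow> ?SD" by (rule iff)
    assume pL: "?pL = seq_prob L \<eta> x"
    then have ?SD using iff by blast
    then show "?pL = p_SEP m (seqS L d) (seq_idx L n) (seq_prob L \<eta>) (seq_state m L \<rho>)"
      and "?pL = (\<Prod>l\<in>{1..L}. p_L m (\<lambda>k. {..<d k}) {1..n l} (\<eta> l) (\<rho> l))"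
      using pL sep prod by simp_all
  qed
qed

end
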